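(* Under the assumptions and notation of the context, there exist $\delta>0$, $T_0>0$ and $C>0$ such that for $j=1,2$ and all $(t,x)\in\Omega_j$, \[ \phi_j^2\,a\le C\Delta,\qquad |\phi_j|\,|\partial_t\Delta|\le C\Delta,\qquad |\phi_j|\le C a . \]
   Context: Let $a(t,x),b(t,x)$ be real-valued real analytic functions near $(0,0)\in\mathbb R^2$ with $\Delta:=4a^3-27b^2\ge0$ on $[0,T)\times U$ ($U$ a neighborhood of $0$), $a(0,0)=0$, $\partial_ta(0,0)\ne0$ (this is the case where $p=\tau^3-a\xi^2\tau-b\xi^3$ has an effectively hyperbolic triple characteristic at $(0,0,0,1)$). By the Weierstrass preparation theorem write $\Delta(t,x)=e_2(t,x)\bar\Delta(t,x)$ near $(0,0)$, with $e_2>0$ and $\bar\Delta=t^3+a_1(x)t^2+a_2(x)t+a_3(x)$, $a_j$ real analytic with $a_j(0)=0$; let $\nu_1(x),\nu_2(x),\nu_3(x)$ be the roots in $t$ of $\bar\Delta(t,x)=0$, and $\psi(x)=\max\{0,\max_k\mathrm{Re}\,\nu_k(x)\}$. Define $\phi_1=t$, $\Omega_1=\{(t,x):|x|<\delta,\ 0\le t\le\psi(x)/2\}$, and $\phi_2=t-\psi(x)$, $\Omega_2=\{(t,x):|x|<\delta,\ \psi(x)/2\le t\le T_0\}$. *)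

theory Defs
  imports "HOL-Analysis.Analysis"
begin

definition real_analytic2_on :: "(real \<Rightarrow> real \<Rightarrow> real) \<Rightarrow> (real \<times> real) set \<Rightarrow> bool" where
  "real_analytic2_on f S \<longleftrightarrow>
     (\<forall>(t0, x0) \<in> S. \<exists>r > 0. \<exists>c :: nat \<Rightarrow> nat \<Rightarrow> real.
        \<forall>t x. \<bar>t - t0\<bar> < r \<and> \<bar>x - x0\<bar> < r \<longrightarrow>
          (\<lambda>(i, j). norm (c i j * (t - t0) ^ i * (x - x0) ^ j)) summable_on UNIV \<and>
          ((\<lambda>(i, j). c i j * (t - t0) ^ i * (x - x0) ^ j) has_sum f t x) UNIV)"

definition real_analytic1_on :: "(real \<Rightarrow> real) \<Rightarrow> real set \<Rightarrow> bool" where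
  "real_analytic1_on f S \<longleftrightarrow>
     (\<forall>x0 \<in> S. \<exists>r > 0. \<exists>c :: nat \<Rightarrow> real.
        \<forall>x. \<bar>x - x0\<bar> < r \<longrightarrow>
          (\<lambda>i. norm (c i * (x - x0) ^ i)) summable_on UNIV \<and>
          ((\<lambda>i. c i * (x - x0) ^ i) has_sum f x) UNIV)"

definition disc :: "(real \<Rightarrow> real \<Rightarrow> real) \<Rightarrow> (real \<Rightarrow> real \<Rightarrow> real) \<Rightarrow> real \<Rightarrow> real \<Rightarrow> real" where
  "disc a b t x = 4 * (a t x) ^ 3 - 27 * (b t x) ^ 2"

definition wroots :: "(real \<Rightarrow> real) \<Rightarrow> (real \<Rightarrow> real) \<Rightarrow> (real \<Rightarrow> real) \<Rightarrow> real \<Rightarrow> complex set" where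
  "wroots a1 a2 a3 x = {z. z ^ 3 + of_real (a1 x) * z ^ 2 + of_real (a2 x) * z + of_real (a3 x) = 0}"

definition psi :: "(real \<Rightarrow> real) \<Rightarrow> (real \<Rightarrow> real) \<Rightarrow> (real \<Rightarrow> real) \<Rightarrow> real \<Rightarrow> real" where
  "psi a1 a2 a3 x = max 0 (Max (Re ` wroots a1 a2 a3 x))"

end

theory Submission
  imports Defs
begin

text \<open>Near x = 0 the Weierstrass polynomial P(t) = t^3 + a1 t^2 + a2 t + a3 has roots of size
  M(x) \<rightarrow> 0: one real root \<le> 0, and two roots whose real parts are \<le> 0 or equal to \<psi>(x), because
  P \<ge> 0 for small t \<ge> 0 rules out two distinct positive real roots. So |\<phi>_j| is at most the distance
  from t to every root, which gives \<phi>_j^2 (t + M) \<le> 3 P and |\<phi>_j| |P'| \<le> 3 P; since \<Delta> = e2 P with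
  e2 bounded below, the estimates follow once a is compared with t + M. From below,
  a(t,x) \<ge> c t with c = \<partial>_t a(0,0) > 0. From above, a(t,x) \<le> a(0,x) + C t, and comparing the
  Taylor coefficients of order 0, 1, 2 in t of 4 a^3 - 27 b^2 = e2 P at t = 0 forces a(0,x) \<le> L M(x).\<close>

section \<open>Power series with geometric coefficient bounds\<close>

lemma geometric_coeffs_term_bound:
  fixes c :: "nat \<Rightarrow> real"
  assumes "\<And>n. \<bar>c n\<bar> \<le> B / \<rho>^n"
  shows "\<bar>c n * y^n\<bar> \<le> B * (\<bar>y\<bar>/\<rho>)^n"
proof -
  have "\<bar>c n * y^n\<bar> = \<bar>c n\<bar> * \<bar>y\<bar>^n" by (simp add: abs_mult power_abs)
  also have "\<dots> \<le> B / \<rho>^n * \<bar>y\<bar>^n" by (rule mult_right_mono[OF assms]) simp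
  finally show ?thesis by (simp add: power_divide)
qed

lemma geometric_coeffs_summable:
  fixes c :: "nat \<Rightarrow> real"
  assumes "\<And>n. \<bar>c n\<bar> \<le> B / \<rho>^n" and "0 < \<rho>" and "\<bar>y\<bar> < \<rho>"
  shows "summable (\<lambda>n. c n * y^n)"
proof (rule summable_comparison_test')
  show "summable (\<lambda>n. B * (\<bar>y\<bar>/\<rho>)^n)"
    using assms(2,3) by (intro summable_mult summable_geometric) auto
qed (use geometric_coeffs_term_bound[OF assms(1)] in auto)

lemma geometric_coeffs_tail_bound:
  fixes c :: "nat \<Rightarrow> real"
  assumes cb: "\<And>n. \<bar>c n\<bar> \<le> B / \<rho>^n" and \<rho>: "0 < \<rho>" and y: "\<bar>y\<bar> \<le> \<rho>/4"
  shows "\<bar>(\<Sum>n. c n * y^n) - (\<Sum>n<k. c n * y^n)\<bar> \<le> 2 * B * (\<bar>y\<bar>/\<rho>)^k"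
proof -
  define q where "q = \<bar>y\<bar>/\<rho>"
  have B: "0 \<le> B" using cb[of 0] by simp
  have q: "0 \<le> q" "q \<le> 1/4" using y \<rho> by (auto simp: q_def field_simps)
  have sm: "summable (\<lambda>n. c n * y^n)" using geometric_coeffs_summable[OF cb \<rho>] y \<rho> by simp
  have tail: "norm (c (n+k) * y^(n+k)) \<le> B * q^k * (1/4)^n" for n
  proof -
    have "norm (c (n+k) * y^(n+k)) \<le> B * q^k * q^n"
      using geometric_coeffs_term_bound[OF cb, of "n+k" y] by (simp add: q_def power_add mult_ac)
    also have "\<dots> \<le> B * q^k * (1/4)^n" using B q by (intro mult_left_mono power_mono) auto
    finally show ?thesis .
  qed
  have "\<bar>(\<Sum>n. c n * y^n) - (\<Sum>n<k. c n * y^n)\<bar> = norm (\<Sum>n. c (n+k) * y^(n+k))"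
    using suminf_split_initial_segment[OF sm, of k] by simp
  also have "\<dots> \<le> (\<Sum>n. B * q^k * (1/4::real)^n)"
    by (rule norm_suminf_le[OF tail]) (intro summable_mult summable_geometric, simp)
  also have "\<dots> = B * q^k * (4/3)"
    using suminf_geometric[of "1/4::real"] by (subst suminf_mult) auto
  also have "\<dots> \<le> 2 * B * q^k" using B q by (simp add: mult_left_mono)
  finally show ?thesis by (simp add: q_def)
qed

lemma geometric_coeffs_diffs_bound:
  fixes c :: "nat \<Rightarrow> real"
  assumes cb: "\<And>n. \<bar>c n\<bar> \<le> B / \<rho>^n" and \<rho>: "0 < \<rho>" and y: "\<bar>y\<bar> \<le> \<rho>/4"
  shows "\<bar>\<Sum>n. diffs c n * y^n\<bar> \<le> 2 * B / \<rho>"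
proof -
  have B: "0 \<le> B" using cb[of 0] by simp
  have bound: "norm (diffs c n * y^n) \<le> B/\<rho> * (1/2)^n" for n
  proof -
    have "real (Suc n) \<le> 2^n" by (induction n) (simp_all add: order_trans[OF _ one_le_power])
    then have "real (Suc n) * (1/4)^n \<le> 2^n * (1/4)^n" by (intro mult_right_mono) auto
    also have "(2::real)^n * (1/4)^n = (1/2)^n" by (simp flip: power_mult_distrib)
    finally have n: "real (Suc n) * (1/4)^n \<le> (1/2)^n" .
    have "norm (diffs c n * y^n) = real (Suc n) * \<bar>c (Suc n) * y^n\<bar>"
      by (simp add: diffs_def abs_mult)
    also have "\<dots> \<le> real (Suc n) * (B/\<rho>^Suc n * (\<rho>/4)^n)"
      unfolding abs_mult power_abs using B \<rho> y by (intro mult_left_mono mult_mono cb power_mono) auto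
    also have "\<dots> = B/\<rho> * (real (Suc n) * (1/4)^n)"
      using \<rho> by (simp add: power_divide field_simps)
    also have "\<dots> \<le> B/\<rho> * (1/2)^n" using B \<rho> n by (intro mult_left_mono) auto
    finally show ?thesis .
  qed
  have "norm (\<Sum>n. diffs c n * y^n) \<le> (\<Sum>n. B/\<rho> * (1/2::real)^n)"
    by (rule norm_suminf_le[OF bound]) (intro summable_mult summable_geometric, simp)
  also have "\<dots> = 2 * B / \<rho>" using suminf_geometric[of "1/2::real"] by (subst suminf_mult) auto
  finally show ?thesis by simp
qed

section \<open>Analytic functions near the origin\<close>

lemma real_analytic1_on_isCont:
  assumes "real_analytic1_on f N" and "x0 \<in> N"
  shows "isCont f x0"
proof -
  obtain r c where r: "0 < r" and rc: "\<And>x. \<bar>x - x0\<bar> < r \<Longrightarrow> ((\<lambda>i. c i * (x - x0)^i) has_sum f x) UNIV"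
    using assms unfolding real_analytic1_on_def by fastforce
  have "summable (\<lambda>i. c i * (r/2)^i)"
    using rc[of "x0 + r/2"] r by (auto dest: has_sum_imp_sums sums_summable)
  then have "isCont (\<lambda>y. \<Sum>i. c i * y^i) (x0 - x0)"
    by (rule isCont_powser) (use r in simp)
  then have "isCont (\<lambda>x. \<Sum>i. c i * (x - x0)^i) x0"
    by (rule isCont_o2[rotated]) (intro continuous_intros)
  moreover have "\<forall>\<^sub>F x in nhds x0. f x = (\<Sum>i. c i * (x - x0)^i)"
  proof (rule eventually_nhds_in_open[of "ball x0 r", THEN eventually_mono])
    show "f x = (\<Sum>i. c i * (x - x0)^i)" if "x \<in> ball x0 r" for x
      using rc[of x] that by (auto simp: dist_real_def abs_minus_commute dest: has_sum_imp_sums sums_unique)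
  qed (use r in auto)
  ultimately show ?thesis by (simp add: isCont_cong)
qed

text \<open>The factor 1/4 keeps every tail estimate below a geometric series of ratio 1/4.\<close>

definition geometric_expansion :: "(real \<Rightarrow> real \<Rightarrow> real) \<Rightarrow> real \<Rightarrow> real \<Rightarrow> (nat \<Rightarrow> real \<Rightarrow> real) \<Rightarrow> bool"
  where "geometric_expansion f \<rho> B F \<longleftrightarrow> 0 < \<rho> \<and> 0 \<le> B \<and>
    (\<forall>i x. \<bar>x\<bar> \<le> \<rho>/4 \<longrightarrow> \<bar>F i x\<bar> \<le> B / \<rho>^i \<and> \<bar>F i x - F i 0\<bar> \<le> B / \<rho>^i * \<bar>x\<bar>) \<and>
    (\<forall>t x. \<bar>t\<bar> < \<rho> \<longrightarrow> \<bar>x\<bar> \<le> \<rho>/4 \<longrightarrow> f t x = (\<Sum>i. F i x * t^i))"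

lemma geometric_expansion_mono:
  assumes "geometric_expansion f \<rho> B F" and "0 < \<rho>'" "\<rho>' \<le> \<rho>" "B \<le> B'"
  shows "geometric_expansion f \<rho>' B' F"
proof -
  have le: "B / \<rho>^i \<le> B' / \<rho>'^i" for i
    using assms by (intro frac_le power_mono) (auto simp: geometric_expansion_def)
  have "\<bar>F i x\<bar> \<le> B' / \<rho>'^i \<and> \<bar>F i x - F i 0\<bar> \<le> B' / \<rho>'^i * \<bar>x\<bar>" if "\<bar>x\<bar> \<le> \<rho>'/4" for i x
  proof -
    have "\<bar>F i x\<bar> \<le> B / \<rho>^i" "\<bar>F i x - F i 0\<bar> \<le> B / \<rho>^i * \<bar>x\<bar>"
      using assms that unfolding geometric_expansion_def by auto
    moreover have "B / \<rho>^i * \<bar>x\<bar> \<le> B' / \<rho>'^i * \<bar>x\<bar>" by (rule mult_right_mono[OF le]) simp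
    ultimately show ?thesis using le[of i] by (blast intro: order_trans)
  qed
  then show ?thesis using assms unfolding geometric_expansion_def by auto
qed

lemma absolutely_summable_coeff_le:
  fixes c :: "nat \<Rightarrow> nat \<Rightarrow> real"
  assumes "(\<lambda>(i, j). norm (c i j * \<rho>^i * \<rho>^j)) summable_on UNIV" and "0 < \<rho>"
  shows "\<bar>c i j\<bar> \<le> infsum (\<lambda>(i, j). norm (c i j * \<rho>^i * \<rho>^j)) UNIV / \<rho>^i / \<rho>^j"
proof -
  have "sum (\<lambda>(i, j). norm (c i j * \<rho>^i * \<rho>^j)) {(i, j)} \<le> infsum (\<lambda>(i, j). norm (c i j * \<rho>^i * \<rho>^j)) UNIV"
    by (rule finite_sum_le_infsum[OF assms(1)]) auto
  then show ?thesis using assms(2) by (simp add: abs_mult field_simps)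
qed

lemma geometric_coeffs_row_has_sum:
  fixes c :: "nat \<Rightarrow> nat \<Rightarrow> real"
  assumes cb: "\<And>i j. \<bar>c i j\<bar> \<le> (S/\<rho>^i) / \<rho>^j" and \<rho>: "0 < \<rho>" and x: "\<bar>x\<bar> < \<rho>"
  shows "((\<lambda>j. c i j * t^i * x^j) has_sum ((\<Sum>j. c i j * x^j) * t^i)) UNIV"
proof -
  have sums: "(\<lambda>j. c i j * x^j * t^i) sums ((\<Sum>j. c i j * x^j) * t^i)"
    using geometric_coeffs_summable[OF cb[of i] \<rho> x] by (intro sums_mult2 summable_sums)
  have "summable (\<lambda>j. \<bar>c i j\<bar> * \<bar>x\<bar>^j)"
    by (rule geometric_coeffs_summable[where B="S/\<rho>^i" and \<rho>=\<rho>]) (use cb x \<rho> in auto)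
  then have "summable (\<lambda>j. norm (c i j * x^j * t^i))"
    using summable_mult2[of _ "\<bar>t\<bar>^i"] by (simp add: abs_mult power_abs)
  then have "((\<lambda>j. c i j * x^j * t^i) has_sum ((\<Sum>j. c i j * x^j) * t^i)) UNIV"
    using sums by (rule norm_summable_imp_has_sum)
  then show ?thesis by (simp add: mult_ac)
qed

lemma real_analytic2_on_geometric_expansion:
  assumes an: "real_analytic2_on f S" and "(0, 0) \<in> S"
  shows "\<exists>\<rho> B F. geometric_expansion f \<rho> B F"
proof -
  obtain r c where r: "0 < r" and rc: "\<And>t x. \<bar>t\<bar> < r \<and> \<bar>x\<bar> < r \<Longrightarrow>
      (\<lambda>(i, j). norm (c i j * t^i * x^j)) summable_on UNIV \<and>
      ((\<lambda>(i, j). c i j * t^i * x^j) has_sum f t x) UNIV"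
    using assms unfolding real_analytic2_on_def by fastforce
  define \<rho> where "\<rho> = r/2"
  have \<rho>: "0 < \<rho>" "\<rho> < r" using r by (auto simp: \<rho>_def)
  define S0 where "S0 = infsum (\<lambda>(i, j). norm (c i j * \<rho>^i * \<rho>^j)) UNIV"
  have cb: "\<bar>c i j\<bar> \<le> (S0/\<rho>^i) / \<rho>^j" for i j
    unfolding S0_def using rc[of \<rho> \<rho>] \<rho> by (intro absolutely_summable_coeff_le) auto
  have S0: "0 \<le> S0" using cb[of 0 0] by simp
  define F where "F i x = (\<Sum>j. c i j * x^j)" for i x
  define B where "B = 2*S0 + 2*S0/\<rho>"
  have "geometric_expansion f \<rho> B F"
    unfolding geometric_expansion_def
  proof (intro conjI allI impI)
    show "0 < \<rho>" "0 \<le> B" using \<rho> S0 by (auto simp: B_def)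
  next
    fix i and x :: real assume x: "\<bar>x\<bar> \<le> \<rho>/4"
    note tail = geometric_coeffs_tail_bound[OF cb \<rho>(1) x]
    have "\<bar>F i x\<bar> \<le> 2*S0/\<rho>^i" using tail[of i 0] by (simp add: F_def)
    also have "\<dots> \<le> B/\<rho>^i" using \<rho> S0 by (intro divide_right_mono) (auto simp: B_def)
    finally show "\<bar>F i x\<bar> \<le> B/\<rho>^i" .
    have "\<bar>F i x - F i 0\<bar> \<le> (2*S0/\<rho>)/\<rho>^i * \<bar>x\<bar>"
      using tail[of i 1] powser_zero[of "c i"] by (simp add: F_def field_simps)
    also have "\<dots> \<le> B/\<rho>^i * \<bar>x\<bar>"
      using \<rho> S0 by (intro mult_right_mono divide_right_mono) (auto simp: B_def)
    finally show "\<bar>F i x - F i 0\<bar> \<le> B/\<rho>^i * \<bar>x\<bar>" .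
  next
    fix t x :: real assume t: "\<bar>t\<bar> < \<rho>" and x: "\<bar>x\<bar> \<le> \<rho>/4"
    have row: "((\<lambda>j. c i j * t^i * x^j) has_sum (F i x * t^i)) UNIV" for i
      unfolding F_def by (rule geometric_coeffs_row_has_sum[OF cb \<rho>(1)]) (use x \<rho> in auto)
    have "((\<lambda>(i, j). c i j * t^i * x^j) has_sum f t x) UNIV" using rc[of t x] t x \<rho> by auto
    then have "((\<lambda>i. F i x * t^i) has_sum f t x) UNIV"
      using has_sum_Sigma'[where A=UNIV and B="\<lambda>_. UNIV" and f="\<lambda>(i, j). c i j * t^i * x^j"] row
      by simp
    then show "f t x = (\<Sum>i. F i x * t^i)" using has_sum_imp_sums sums_unique by blast
  qed
  then show ?thesis by blast
qed

definition expansion_deriv :: "(nat \<Rightarrow> real \<Rightarrow> real) \<Rightarrow> real \<Rightarrow> real \<Rightarrow> real"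
  where "expansion_deriv F x t = (\<Sum>n. diffs (\<lambda>i. F i x) n * t^n)"

context
  fixes f :: "real \<Rightarrow> real \<Rightarrow> real" and F :: "nat \<Rightarrow> real \<Rightarrow> real" and \<rho> B x :: real
  assumes exp: "geometric_expansion f \<rho> B F" and x: "\<bar>x\<bar> \<le> \<rho>/4"
begin

lemma geometric_expansion_pos: "0 < \<rho>" "0 \<le> B"
  using exp by (auto simp: geometric_expansion_def)

lemma geometric_expansion_coeff_bound: "\<bar>F i x\<bar> \<le> B / \<rho>^i"
  and geometric_expansion_coeff_lipschitz: "\<bar>F i x - F i 0\<bar> \<le> B / \<rho>^i * \<bar>x\<bar>"
  using exp x by (auto simp: geometric_expansion_def)

lemma geometric_expansion_eq: "\<bar>t\<bar> < \<rho> \<Longrightarrow> f t x = (\<Sum>i. F i x * t^i)"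
  using exp x by (auto simp: geometric_expansion_def)

lemma geometric_expansion_at_zero: "f 0 x = F 0 x"
  using geometric_expansion_eq[of 0] geometric_expansion_pos by simp

lemma geometric_expansion_taylor0:
  assumes "\<bar>t\<bar> \<le> \<rho>/4"
  shows "\<bar>f t x - F 0 x\<bar> \<le> 2 * B * \<bar>t\<bar> / \<rho>"
  using geometric_coeffs_tail_bound[OF geometric_expansion_coeff_bound geometric_expansion_pos(1) assms, of 1]
    geometric_expansion_eq[of t] assms geometric_expansion_pos by simp

lemma geometric_expansion_taylor1:
  assumes "\<bar>t\<bar> \<le> \<rho>/4"
  shows "\<bar>f t x - F 0 x - F 1 x * t\<bar> \<le> 2 * B * t^2 / \<rho>^2"
  using geometric_coeffs_tail_bound[OF geometric_expansion_coeff_bound geometric_expansion_pos(1) assms, of 2]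
    geometric_expansion_eq[of t] assms geometric_expansion_pos
  by (simp add: numeral_2_eq_2 power_divide power2_abs)

lemma geometric_expansion_has_derivative:
  assumes "\<bar>t\<bar> < \<rho>"
  shows "((\<lambda>s. f s x) has_real_derivative expansion_deriv F x t) (at t)"
proof (rule has_field_derivative_transform_within_open[where S="{-\<rho><..<\<rho>}"])
  show "((\<lambda>s. \<Sum>i. F i x * s^i) has_real_derivative expansion_deriv F x t) (at t)"
    unfolding expansion_deriv_def
    by (rule termdiffs_strong'[where K=\<rho>])
      (use geometric_coeffs_summable[OF geometric_expansion_coeff_bound geometric_expansion_pos(1)] assms in auto)
qed (use assms geometric_expansion_eq in auto)

lemma expansion_deriv_bound: "\<bar>t\<bar> \<le> \<rho>/4 \<Longrightarrow> \<bar>expansion_deriv F x t\<bar> \<le> 2 * B / \<rho>"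
  unfolding expansion_deriv_def
  by (rule geometric_coeffs_diffs_bound[OF geometric_expansion_coeff_bound geometric_expansion_pos(1)])

lemma expansion_deriv_at_zero: "expansion_deriv F x 0 = F 1 x"
  by (simp add: expansion_deriv_def diffs_def)

lemma expansion_deriv_has_derivative_at_zero:
  "(expansion_deriv F x has_real_derivative 2 * F 2 x) (at 0)"
proof -
  note summable = geometric_coeffs_summable[OF geometric_expansion_coeff_bound geometric_expansion_pos(1)]
  have "summable (\<lambda>n. diffs (\<lambda>i. F i x) n * z^n)" if "norm z < \<rho>" for z :: real
    by (rule termdiff_converges[where K=\<rho>]) (use summable that in auto)
  then have "(expansion_deriv F x has_real_derivative (\<Sum>n. diffs (diffs (\<lambda>i. F i x)) n * 0^n)) (at 0)"
    unfolding expansion_deriv_def by (intro termdiffs_strong'[where K=\<rho>]) (use geometric_expansion_pos in auto)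
  then show ?thesis by (simp add: diffs_def numeral_2_eq_2)
qed

end

lemma real_analytic2_on_common_expansion:
  assumes "real_analytic2_on f S" "(0, 0) \<in> S" "real_analytic2_on g S'" "(0, 0) \<in> S'"
    and "real_analytic2_on k S''" "(0, 0) \<in> S''"
  obtains \<rho> B F G H where "geometric_expansion f \<rho> B F" "geometric_expansion g \<rho> B G"
    "geometric_expansion k \<rho> B H"
proof -
  obtain \<rho>1 B1 F \<rho>2 B2 G \<rho>3 B3 H where e: "geometric_expansion f \<rho>1 B1 F"
    "geometric_expansion g \<rho>2 B2 G" "geometric_expansion k \<rho>3 B3 H"
    using real_analytic2_on_geometric_expansion assms by metis
  define \<rho> where "\<rho> = min \<rho>1 (min \<rho>2 \<rho>3)"
  define B where "B = max B1 (max B2 B3)"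
  have "0 < \<rho>" using e by (simp add: \<rho>_def geometric_expansion_def)
  then show ?thesis
    using that geometric_expansion_mono[OF e(1), of \<rho> B] geometric_expansion_mono[OF e(2), of \<rho> B]
      geometric_expansion_mono[OF e(3), of \<rho> B] by (simp add: \<rho>_def B_def min_le_iff_disj le_max_iff_disj)
qed

lemma small_radius:
  fixes h0 c K :: real
  assumes "0 < h0" "0 < c" "0 \<le> K"
  obtains h where "0 < h" "h \<le> h0" "K*h \<le> c"
proof
  show "0 < min h0 (c / (K + 1))" "min h0 (c / (K + 1)) \<le> h0" using assms by auto
  have "K * min h0 (c / (K + 1)) \<le> (K + 1) * (c / (K + 1))" using assms by (intro mult_mono) auto
  then show "K * min h0 (c / (K + 1)) \<le> c" using assms by simp
qed

lemma isCont_small_near_zero: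
  fixes f :: "real \<Rightarrow> real"
  assumes "isCont f 0" "f 0 = 0" "0 < \<epsilon>"
  obtains \<delta> where "0 < \<delta>" "\<And>x. \<bar>x\<bar> < \<delta> \<Longrightarrow> \<bar>f x\<bar> \<le> \<epsilon>"
  using assms unfolding continuous_at_eps_delta dist_real_def by (metis diff_zero less_imp_le)

lemma open_contains_square:
  assumes "open S" "((0::real), (0::real)) \<in> S"
  obtains e where "0 < e" "\<And>s x. \<bar>s\<bar> < e \<Longrightarrow> \<bar>x\<bar> < e \<Longrightarrow> (s, x) \<in> S"
proof -
  obtain e where e: "0 < e" "\<And>y. dist y (0, 0) < e \<Longrightarrow> y \<in> S" using assms unfolding open_dist by blast
  have "(s, x) \<in> S" if "\<bar>s\<bar> < e/2" "\<bar>x\<bar> < e/2" for s x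
    using e(2)[of "(s, x)"] that sqrt_sum_squares_le_sum_abs[of s x] by (simp add: dist_Pair_Pair dist_real_def)
  then show ?thesis using that[of "e/2"] e(1) by simp
qed

lemma open_contains_interval:
  assumes "open U" "(0::real) \<in> U"
  obtains e where "0 < e" "\<And>x. \<bar>x\<bar> < e \<Longrightarrow> x \<in> U"
  using assms unfolding open_dist by (metis dist_real_def diff_zero)

section \<open>Real cubic polynomials\<close>

definition cubic :: "real \<Rightarrow> real \<Rightarrow> real \<Rightarrow> 'a::real_algebra_1 \<Rightarrow> 'a"
  where "cubic p q r z = z^3 + of_real p * z^2 + of_real q * z + of_real r"

lemma cubic_real: "cubic p q r (t::real) = t^3 + p * t^2 + q * t + r"
  by (simp add: cubic_def)

lemma cubic_of_real: "cubic p q r (of_real t :: 'a::real_algebra_1) = of_real (cubic p q r t)"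
  by (simp add: cubic_def)

lemma cubic_has_real_derivative: "(cubic p q r has_real_derivative 3*t^2 + 2*p*t + q) (at t)"
  unfolding cubic_def by (rule derivative_eq_intros refl | simp add: power2_eq_square algebra_simps)+

lemma cubic_root_norm_le:
  fixes z :: complex
  assumes z: "cubic p q r z = 0" and \<epsilon>: "0 < \<epsilon>"
    and small: "\<bar>p\<bar> \<le> \<epsilon>/3" "\<bar>q\<bar> \<le> \<epsilon>^2/3" "\<bar>r\<bar> \<le> \<epsilon>^3/3"
  shows "cmod z \<le> \<epsilon>"
proof (rule ccontr)
  define u where "u = cmod z"
  assume "\<not> cmod z \<le> \<epsilon>"
  then have u: "\<epsilon> < u" by (simp add: u_def)
  have "z^3 = - (of_real p * z^2 + of_real q * z + of_real r)"
    using z by (simp add: cubic_def algebra_simps eq_neg_iff_add_eq_0)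
  then have "u^3 = cmod (- (of_real p * z^2 + of_real q * z + of_real r))"
    by (simp only: u_def flip: norm_power)
  also have "\<dots> = cmod (of_real p * z^2 + of_real q * z + of_real r)"
    by (rule norm_minus_cancel)
  also have "\<dots> \<le> \<bar>p\<bar> * u^2 + \<bar>q\<bar> * u + \<bar>r\<bar>"
    by (smt (verit) norm_triangle_ineq norm_mult norm_power norm_of_real u_def)
  finally have u3: "u^3 \<le> \<bar>p\<bar> * u^2 + \<bar>q\<bar> * u + \<bar>r\<bar>" .
  have "\<bar>p\<bar> * u^2 \<le> \<epsilon>/3 * u^2" by (intro mult_right_mono small) simp
  also have "\<dots> < u/3 * u^2" using u \<epsilon> by (intro mult_strict_right_mono) auto
  finally have 1: "\<bar>p\<bar> * u^2 < u^3/3" by (simp add: power2_eq_square power3_eq_cube)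
  have "\<bar>q\<bar> * u \<le> \<epsilon>^2/3 * u" using u \<epsilon> by (intro mult_right_mono small) auto
  also have "\<dots> < u^2/3 * u" using u \<epsilon> by (intro mult_strict_right_mono power_strict_mono divide_strict_right_mono) auto
  finally have 2: "\<bar>q\<bar> * u < u^3/3" by (simp add: power2_eq_square power3_eq_cube)
  have "\<epsilon>^3 < u^3" using u \<epsilon> by (intro power_strict_mono) auto
  then have 3: "\<bar>r\<bar> < u^3/3" using small(3) by simp
  show False using u3 1 2 3 by simp
qed

lemma cubic_nonpos_root:
  assumes "0 \<le> r"
  obtains s :: real where "s \<le> 0" "cubic p q r s = 0"
proof -
  define L where "L = 1 + \<bar>p\<bar> + \<bar>q\<bar> + \<bar>r\<bar>"
  have L1: "1 \<le> L" by (simp add: L_def)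
  then have L: "1 \<le> L" "L \<le> L^2" using mult_left_mono[OF L1, of L] by (simp_all add: power2_eq_square)
  have "cubic p q r (-L) \<le> - (L^3) + \<bar>p\<bar> * L^2 + \<bar>q\<bar> * L^2 + \<bar>r\<bar> * L^2"
  proof -
    have "- q * L \<le> \<bar>q\<bar> * L" using L by (intro mult_right_mono) auto
    also have "\<dots> \<le> \<bar>q\<bar> * L^2" using L by (intro mult_left_mono) auto
    finally have "- q * L \<le> \<bar>q\<bar> * L^2" .
    moreover have "p * L^2 \<le> \<bar>p\<bar> * L^2" by (intro mult_right_mono) auto
    moreover have "r \<le> \<bar>r\<bar> * L^2" using mult_left_mono[of 1 "L^2" "\<bar>r\<bar>"] L by simp
    ultimately show ?thesis by (simp add: cubic_real)
  qed
  also have "\<dots> = - (L^2)" by (simp add: L_def power2_eq_square power3_eq_cube algebra_simps)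
  finally have "cubic p q r (-L) \<le> 0" using zero_le_power2[of L] by linarith
  moreover have "0 \<le> cubic p q r (0::real)" using assms by (simp add: cubic_real)
  moreover have "continuous_on {-L..0} (cubic p q r :: real \<Rightarrow> real)"
    unfolding cubic_def by (intro continuous_intros)
  ultimately obtain s where "-L \<le> s" "s \<le> 0" "cubic p q r s = 0"
    using IVT'[of "cubic p q r" "-L" 0 0] L by auto
  then show ?thesis using that by blast
qed

lemma cubic_factorization:
  assumes "cubic p q r s = (0::real)"
  obtains \<nu> \<mu> :: complex
  where "\<And>z. cubic p q r z = (z - of_real s) * (z - \<nu>) * (z - \<mu>)"
    and "Re \<mu> \<le> Re \<nu>" and "Re \<mu> = Re \<nu> \<or> (\<nu> \<in> \<real> \<and> \<mu> \<in> \<real>)"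
proof -
  define p' where "p' = p + s"
  define q' where "q' = q + s * p'"
  have r: "r = - s * q'" using assms by (simp add: cubic_real p'_def q'_def power2_eq_square power3_eq_cube algebra_simps)
  define d where "d = p'^2 - 4*q'"
  define w where "w = csqrt (of_real d)"
  define \<nu> where "\<nu> = (- of_real p' + w) / 2"
  define \<mu> where "\<mu> = (- of_real p' - w) / 2"
  have w2: "w^2 = of_real d" by (simp add: w_def)
  have "\<nu> * \<mu> = (of_real p'^2 - w^2) / 4" by (simp add: \<nu>_def \<mu>_def field_simps power2_eq_square)
  then have prod: "\<nu> * \<mu> = of_real q'" by (simp add: w2 d_def)
  have sum: "\<nu> + \<mu> = - of_real p'" by (simp add: \<nu>_def \<mu>_def field_simps)
  have "(z - of_real s) * (z - \<nu>) * (z - \<mu>) = cubic p q r z" for z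
  proof -
    have "(z - of_real s) * (z - \<nu>) * (z - \<mu>) = (z - of_real s) * (z^2 - (\<nu> + \<mu>) * z + \<nu> * \<mu>)"
      by (simp add: algebra_simps power2_eq_square)
    also have "\<dots> = (z - of_real s) * (z^2 + of_real p' * z + of_real q')" by (simp add: sum prod)
    also have "\<dots> = cubic p q r z"
      by (simp add: cubic_def p'_def q'_def r algebra_simps power2_eq_square power3_eq_cube)
    finally show ?thesis .
  qed
  moreover have "Re \<mu> \<le> Re \<nu>"
    using Re_csqrt[of "of_real d"] by (simp add: \<nu>_def \<mu>_def w_def)
  moreover have "Re \<mu> = Re \<nu> \<or> (\<nu> \<in> \<real> \<and> \<mu> \<in> \<real>)"
  proof (cases "d < 0")
    case True
    then show ?thesis by (simp add: \<nu>_def \<mu>_def w_def)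
  next
    case False
    then have "w = of_real (sqrt d)" by (simp add: w_def csqrt_of_real)
    then show ?thesis by (simp add: \<nu>_def \<mu>_def)
  qed
  ultimately show ?thesis using that by metis
qed

lemma cubic_vieta:
  assumes "\<And>z. cubic p q r z = (z - z1) * (z - z2) * (z - (z3::complex))"
  shows "of_real p = - (z1 + z2 + z3)" "of_real q = z1*z2 + z1*z3 + z2*z3" "of_real r = - (z1*z2*z3)"
proof -
  define A where "A = of_real p + (z1 + z2 + z3)"
  define B where "B = of_real q - (z1*z2 + z1*z3 + z2*z3)"
  define C where "C = of_real r + z1*z2*z3"
  have eq: "A * z^2 + B * z + C = 0" for z
    using assms[of z] by (simp add: A_def B_def C_def cubic_def algebra_simps power2_eq_square power3_eq_cube)
  have "C = 0" using eq[of 0] by simp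
  moreover have "A + B = 0" "A - B = 0" using eq[of 1] eq[of "-1"] \<open>C = 0\<close> by simp_all
  ultimately have "A = 0" "B = 0" "C = 0" by (simp_all add: algebra_simps)
  then show "of_real p = - (z1 + z2 + z3)" "of_real q = z1*z2 + z1*z3 + z2*z3" "of_real r = - (z1*z2*z3)"
    by (simp_all add: A_def B_def C_def algebra_simps eq_neg_iff_add_eq_0)
qed

lemma norm_add3_le: "norm ((x::'a::real_normed_vector) + y + z) \<le> norm x + norm y + norm z"
  using norm_triangle_ineq[of "x + y" z] norm_triangle_ineq[of x y] by linarith

lemma cubic_coeffs_le_root_bound:
  assumes fact: "\<And>z. cubic p q r z = (z - z1) * (z - z2) * (z - (z3::complex))"
    and M: "cmod z1 \<le> M" "cmod z2 \<le> M" "cmod z3 \<le> M"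
  shows "\<bar>p\<bar> \<le> 3*M" "\<bar>q\<bar> \<le> 3*M^2" "\<bar>r\<bar> \<le> M^3"
proof -
  note vieta = cubic_vieta[OF fact]
  have M0: "0 \<le> M" using M(1) norm_ge_zero[of z1] by linarith
  have "\<bar>p\<bar> = cmod (z1 + z2 + z3)" by (metis vieta(1) norm_minus_cancel norm_of_real)
  also have "\<dots> \<le> cmod z1 + cmod z2 + cmod z3" by (rule norm_add3_le)
  finally show "\<bar>p\<bar> \<le> 3*M" using M by simp
  have "\<bar>q\<bar> = cmod (z1*z2 + z1*z3 + z2*z3)" by (metis vieta(2) norm_of_real)
  also have "\<dots> \<le> cmod z1 * cmod z2 + cmod z1 * cmod z3 + cmod z2 * cmod z3"
    using norm_add3_le[of "z1*z2" "z1*z3" "z2*z3"] by (simp only: norm_mult)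
  also have "\<dots> \<le> M*M + M*M + M*M" using M M0 by (intro add_mono mult_mono) auto
  finally show "\<bar>q\<bar> \<le> 3*M^2" by (simp add: power2_eq_square)
  have "\<bar>r\<bar> = cmod z1 * cmod z2 * cmod z3" by (metis vieta(3) norm_minus_cancel norm_mult norm_of_real)
  also have "\<dots> \<le> M*M*M" using M M0 by (intro mult_mono) auto
  finally show "\<bar>r\<bar> \<le> M^3" by (simp add: power3_eq_cube)
qed

text \<open>Two distinct positive real roots would make the cubic negative between them.\<close>

lemma cubic_roots_real_parts:
  assumes fact: "\<And>z. cubic p q r z = (z - of_real s) * (z - \<nu>) * (z - \<mu>)"
    and s: "s \<le> 0" and \<nu>\<mu>: "Re \<mu> = Re \<nu> \<or> (\<nu> \<in> \<real> \<and> \<mu> \<in> \<real>)" "Re \<mu> \<le> Re \<nu>"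
    and nonneg: "\<And>t. 0 < t \<Longrightarrow> t < T \<Longrightarrow> 0 \<le> cubic p q r (t::real)" and "Re \<nu> < T"
  shows "Re \<mu> \<le> 0 \<or> Re \<mu> = Re \<nu>"
proof (rule ccontr)
  assume "\<not> ?thesis"
  then have pos: "0 < Re \<mu>" "Re \<mu> < Re \<nu>" using \<nu>\<mu>(2) by auto
  then have real: "\<nu> = of_real (Re \<nu>)" "\<mu> = of_real (Re \<mu>)" using \<nu>\<mu>(1) by (auto elim!: Reals_cases)
  define m where "m = (Re \<mu> + Re \<nu>) / 2"
  have "(m - s) * (m - Re \<nu>) * (m - Re \<mu>) < 0"
    using s pos by (intro mult_pos_neg mult_neg_pos) (auto simp: m_def)
  moreover have "(of_real (cubic p q r m) :: complex) = of_real ((m - s) * (m - Re \<nu>) * (m - Re \<mu>))"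
    by (simp add: fact real(1)[symmetric] real(2)[symmetric] flip: cubic_of_real)
  ultimately show False using nonneg[of m] pos \<open>Re \<nu> < T\<close> unfolding of_real_eq_iff by (auto simp: m_def)
qed

text \<open>The two disjuncts are the regions \<Omega>_1 (\<phi> = t) and \<Omega>_2 (\<phi> = t - \<psi>).\<close>

lemma abs_phi_le_dist_root:
  assumes "0 \<le> t" "0 \<le> \<psi>" "Re z \<le> 0 \<or> Re z = \<psi>"
    and "(t \<le> \<psi>/2 \<and> \<phi> = t) \<or> (\<psi>/2 \<le> t \<and> \<phi> = t - \<psi>)"
  shows "\<bar>\<phi>\<bar> \<le> cmod (of_real t - z)"
proof -
  have "\<bar>\<phi>\<bar> \<le> \<bar>t - Re z\<bar>" using assms by auto
  also have "\<dots> \<le> cmod (of_real t - z)" using abs_Re_le_cmod[of "of_real t - z"] by simp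
  finally show ?thesis .
qed

lemma three_factor_estimates:
  fixes m1 m2 m3 \<phi> :: real
  assumes m: "0 \<le> m1" "0 \<le> m2" "0 \<le> m3" and \<phi>: "\<bar>\<phi>\<bar> \<le> m1" "\<bar>\<phi>\<bar> \<le> m2" "\<bar>\<phi>\<bar> \<le> m3"
  shows "\<bar>\<phi>\<bar> * (m2*m3 + m1*m3 + m1*m2) \<le> 3 * (m1*m2*m3)"
    and "\<phi>^2 * max m1 (max m2 m3) \<le> m1*m2*m3"
proof -
  have "\<bar>\<phi>\<bar> * (m2*m3) \<le> m1*m2*m3" "\<bar>\<phi>\<bar> * (m1*m3) \<le> m1*m2*m3" "\<bar>\<phi>\<bar> * (m1*m2) \<le> m1*m2*m3"
    using mult_right_mono[OF \<phi>(1), of "m2*m3"] mult_right_mono[OF \<phi>(2), of "m1*m3"]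
      mult_right_mono[OF \<phi>(3), of "m1*m2"] m by (simp_all add: mult_ac)
  then show "\<bar>\<phi>\<bar> * (m2*m3 + m1*m3 + m1*m2) \<le> 3 * (m1*m2*m3)" by (simp add: distrib_left)
  have sq: "\<phi>^2 = \<bar>\<phi>\<bar> * \<bar>\<phi>\<bar>" by (simp add: power2_eq_square)
  have sq23: "\<phi>^2 \<le> m2*m3" and sq13: "\<phi>^2 \<le> m1*m3" and sq12: "\<phi>^2 \<le> m1*m2"
    unfolding sq using \<phi> m by (intro mult_mono; simp)+
  have "\<phi>^2 * m1 \<le> m1*m2*m3" "\<phi>^2 * m2 \<le> m1*m2*m3" "\<phi>^2 * m3 \<le> m1*m2*m3"
    using mult_right_mono[OF sq23 m(1)] mult_right_mono[OF sq13 m(2)] mult_right_mono[OF sq12 m(3)]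
    by (simp_all add: mult_ac)
  then show "\<phi>^2 * max m1 (max m2 m3) \<le> m1*m2*m3" by (auto simp: max_def)
qed

lemma cubic_deriv_le_root_dists:
  fixes z1 z2 z3 :: complex
  assumes fact: "\<And>z. cubic p q r z = (z - z1) * (z - z2) * (z - z3)"
  shows "\<bar>3*t^2 + 2*p*t + q\<bar> \<le> cmod (of_real t - z2) * cmod (of_real t - z3)
    + cmod (of_real t - z1) * cmod (of_real t - z3) + cmod (of_real t - z1) * cmod (of_real t - z2)"
proof -
  note vieta = cubic_vieta[OF fact]
  have deriv_eq: "of_real (3*t^2 + 2*p*t + q) =
      (of_real t - z2) * (of_real t - z3) + (of_real t - z1) * (of_real t - z3) + (of_real t - z1) * (of_real t - z2)"
    by (simp add: vieta(1,2) algebra_simps power2_eq_square)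
  have "\<bar>3*t^2 + 2*p*t + q\<bar> = cmod ((of_real t - z2) * (of_real t - z3)
      + (of_real t - z1) * (of_real t - z3) + (of_real t - z1) * (of_real t - z2))"
    using arg_cong[OF deriv_eq, of norm] unfolding norm_of_real .
  also have "\<dots> \<le> cmod (of_real t - z2) * cmod (of_real t - z3)
      + cmod (of_real t - z1) * cmod (of_real t - z3) + cmod (of_real t - z1) * cmod (of_real t - z2)"
    by (rule order_trans[OF norm_add3_le]) (simp add: norm_mult)
  finally show ?thesis .
qed

lemma cubic_factored_estimates:
  fixes z1 z2 z3 :: complex
  assumes fact: "\<And>z. cubic p q r z = (z - z1) * (z - z2) * (z - z3)"
    and roots: "\<And>z. z \<in> {z1, z2, z3} \<Longrightarrow> Re z \<le> 0 \<or> Re z = \<psi>" and z1: "Re z1 \<le> 0"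
    and \<psi>: "0 \<le> \<psi>" and t: "0 \<le> t" "0 \<le> cubic p q r t"
    and region: "(t \<le> \<psi>/2 \<and> \<phi> = t) \<or> (\<psi>/2 \<le> t \<and> \<phi> = t - \<psi>)"
    and M: "M = max (cmod z1) (max (cmod z2) (cmod z3))"
  shows "\<bar>\<phi>\<bar> \<le> t" "\<bar>\<phi>\<bar> * \<bar>3*t^2 + 2*p*t + q\<bar> \<le> 3 * cubic p q r t"
    and "\<phi>^2 * (t + M) \<le> 3 * cubic p q r t"
proof -
  define m where "m z = cmod (of_real t - z)" for z
  have \<phi>: "\<bar>\<phi>\<bar> \<le> m z1" "\<bar>\<phi>\<bar> \<le> m z2" "\<bar>\<phi>\<bar> \<le> m z3"
    unfolding m_def using abs_phi_le_dist_root[OF t(1) \<psi> roots region] by auto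
  have m: "0 \<le> m z" for z by (simp add: m_def)
  note est = three_factor_estimates[OF m m m \<phi>]
  have "\<bar>cubic p q r t\<bar> = m z1 * m z2 * m z3"
    using arg_cong[OF fact[of "of_real t"], of cmod] by (simp add: m_def norm_mult cubic_of_real)
  then have cub: "cubic p q r t = m z1 * m z2 * m z3" using t(2) by simp
  have "\<bar>3*t^2 + 2*p*t + q\<bar> \<le> m z2 * m z3 + m z1 * m z3 + m z1 * m z2"
    unfolding m_def by (rule cubic_deriv_le_root_dists[OF fact])
  then have "\<bar>\<phi>\<bar> * \<bar>3*t^2 + 2*p*t + q\<bar> \<le> \<bar>\<phi>\<bar> * (m z2 * m z3 + m z1 * m z3 + m z1 * m z2)"
    by (rule mult_left_mono) simp
  then show "\<bar>\<phi>\<bar> * \<bar>3*t^2 + 2*p*t + q\<bar> \<le> 3 * cubic p q r t"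
    using est(1) unfolding cub by linarith
  show "\<bar>\<phi>\<bar> \<le> t" using region \<psi> t by auto
  have "t \<le> m z1" using abs_Re_le_cmod[of "of_real t - z1"] z1 by (simp add: m_def)
  moreover have "cmod z - t \<le> m z" for z
    using norm_triangle_ineq2[of z "of_real t"] t(1) by (simp add: m_def norm_minus_commute)
  ultimately have tM: "t + M \<le> 3 * max (m z1) (max (m z2) (m z3))"
    unfolding M max_def by (smt (verit) norm_ge_zero)
  have "\<phi>^2 * (t + M) \<le> 3 * (\<phi>^2 * max (m z1) (max (m z2) (m z3)))"
    using mult_left_mono[OF tM, of "\<phi>^2"] by (simp add: mult_ac)
  then show "\<phi>^2 * (t + M) \<le> 3 * cubic p q r t" using est(2) unfolding cub by linarith
qed

lemma cubic_estimates:
  fixes p q r T \<psi> :: real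
  assumes nonneg: "\<And>t. 0 \<le> t \<Longrightarrow> t < T \<Longrightarrow> 0 \<le> cubic p q r t"
    and T: "0 < T" and small: "\<bar>p\<bar> \<le> (T/4)/3" "\<bar>q\<bar> \<le> (T/4)^2/3" "\<bar>r\<bar> \<le> (T/4)^3/3"
    and \<psi>: "\<psi> = max 0 (Max (Re ` {z::complex. cubic p q r z = 0}))"
  obtains M where "0 \<le> M" "M \<le> T/4" "\<bar>p\<bar> \<le> 3*M" "\<bar>q\<bar> \<le> 3*M^2" "\<bar>r\<bar> \<le> M^3" "\<psi> \<le> T/4"
    and "\<And>t \<phi>. 0 \<le> t \<Longrightarrow> t < T \<Longrightarrow> (t \<le> \<psi>/2 \<and> \<phi> = t) \<or> (\<psi>/2 \<le> t \<and> \<phi> = t - \<psi>) \<Longrightarrow>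
      \<bar>\<phi>\<bar> \<le> t \<and> \<bar>\<phi>\<bar> * \<bar>3*t^2 + 2*p*t + q\<bar> \<le> 3 * cubic p q r t \<and> \<phi>^2 * (t + M) \<le> 3 * cubic p q r t"
proof -
  have "0 \<le> r" using nonneg[of 0] T by (simp add: cubic_real)
  then obtain s :: real where s: "s \<le> 0" "cubic p q r s = 0" by (rule cubic_nonpos_root)
  obtain \<nu> \<mu> where fact: "\<And>z. cubic p q r z = (z - of_real s) * (z - \<nu>) * (z - \<mu>)"
    and \<nu>\<mu>: "Re \<mu> \<le> Re \<nu>" "Re \<mu> = Re \<nu> \<or> (\<nu> \<in> \<real> \<and> \<mu> \<in> \<real>)"
    using cubic_factorization[OF s(2)] by blast
  have roots: "{z. cubic p q r z = 0} = {of_real s, \<nu>, \<mu>}" by (auto simp: fact)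
  have \<psi>_eq: "\<psi> = max 0 (Re \<nu>)" using s(1) \<nu>\<mu>(1) by (simp add: \<psi> roots max_def)
  have root_small: "cmod z \<le> T/4" if "z \<in> {of_real s, \<nu>, \<mu>}" for z
    by (rule cubic_root_norm_le) (use that fact T small in auto)
  have "Re \<mu> \<le> 0 \<or> Re \<mu> = Re \<nu>"
    using cubic_roots_real_parts[OF fact s(1) \<nu>\<mu>(2,1) nonneg, of T] root_small[of \<nu>]
      complex_Re_le_cmod[of \<nu>] T by fastforce
  then have real_parts: "Re z \<le> 0 \<or> Re z = \<psi>" if "z \<in> {of_real s, \<nu>, \<mu>}" for z
    using that s(1) by (auto simp: \<psi>_eq)
  define M where "M = max (cmod (of_real s :: complex)) (max (cmod \<nu>) (cmod \<mu>))"
  have M: "0 \<le> M" "M \<le> T/4"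
    using root_small[of "of_real s"] root_small[of \<nu>] root_small[of \<mu>] by (auto simp: M_def)
  have coeffs: "\<bar>p\<bar> \<le> 3*M" "\<bar>q\<bar> \<le> 3*M^2" "\<bar>r\<bar> \<le> M^3"
    by (rule cubic_coeffs_le_root_bound[OF fact]; simp add: M_def)+
  have \<psi>T: "\<psi> \<le> T/4" using root_small[of \<nu>] complex_Re_le_cmod[of \<nu>] T by (auto simp: \<psi>_eq)
  show ?thesis
  proof (rule that[OF M coeffs \<psi>T])
    fix t \<phi> assume t: "0 \<le> t" "t < T" and region: "(t \<le> \<psi>/2 \<and> \<phi> = t) \<or> (\<psi>/2 \<le> t \<and> \<phi> = t - \<psi>)"
    show "\<bar>\<phi>\<bar> \<le> t \<and> \<bar>\<phi>\<bar> * \<bar>3*t^2 + 2*p*t + q\<bar> \<le> 3 * cubic p q r t \<and> \<phi>^2 * (t + M) \<le> 3 * cubic p q r t"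
      using cubic_factored_estimates[OF fact real_parts _ _ t(1) nonneg[OF t] region M_def] s(1)
      by (simp add: \<psi>_eq)
  qed
qed

section \<open>Taylor coefficients of the discriminant\<close>

lemma discriminant_taylor_identities:
  fixes a b e a' b' e' :: "real \<Rightarrow> real"
  assumes h: "0 < h"
    and eq: "\<And>s. \<bar>s\<bar> < h \<Longrightarrow> 4 * a s^3 - 27 * b s^2 = e s * cubic p q r s"
    and da: "\<And>s. \<bar>s\<bar> < h \<Longrightarrow> (a has_real_derivative a' s) (at s)"
    and db: "\<And>s. \<bar>s\<bar> < h \<Longrightarrow> (b has_real_derivative b' s) (at s)"
    and de: "\<And>s. \<bar>s\<bar> < h \<Longrightarrow> (e has_real_derivative e' s) (at s)"
    and dda: "(a' has_real_derivative 2 * A2) (at 0)"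
    and ddb: "(b' has_real_derivative 2 * B2) (at 0)"
    and dde: "(e' has_real_derivative 2 * E2) (at 0)"
  shows "27 * b 0^2 = 4 * a 0^3 - e 0 * r"
    and "54 * b 0 * b' 0 = 12 * a 0^2 * a' 0 - (e 0 * q + e' 0 * r)"
    and "27 * b' 0^2 = 12 * a 0 * a' 0^2 + 12 * a 0^2 * A2 - 54 * b 0 * B2 - (e 0 * p + e' 0 * q + E2 * r)"
proof -
  define G where "G s = 27 * (b s * b s) - 4 * (a s * a s * a s) + e s * cubic p q r s" for s
  define G' where "G' s = 54 * (b s * b' s) - 12 * (a s * a s * a' s) + e' s * cubic p q r s
      + e s * (3 * s^2 + 2 * p * s + q)" for s
  have G: "G s = 0" if "\<bar>s\<bar> < h" for s
    using eq[OF that] by (simp add: G_def cubic_real power2_eq_square power3_eq_cube algebra_simps)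
  have zero_deriv: "(f has_real_derivative 0) (at s)" if "\<And>z. \<bar>z\<bar> < h \<Longrightarrow> f z = 0" "\<bar>s\<bar> < h" for f s
    by (rule has_field_derivative_transform_within_open[of "\<lambda>_. 0" 0 s "{-h<..<h}"]) (use that in auto)
  have DG: "(G has_real_derivative G' s) (at s)" if "\<bar>s\<bar> < h" for s
    unfolding G_def G'_def
    by (rule derivative_eq_intros cubic_has_real_derivative da[OF that] db[OF that] de[OF that] refl | simp add: algebra_simps)+
  have G': "G' s = 0" if "\<bar>s\<bar> < h" for s
    using DERIV_unique[OF DG[OF that] zero_deriv[of G s]] G that by auto
  have h0: "\<bar>0::real\<bar> < h" using h by simp
  have "(G' has_real_derivative
      54 * (b' 0 * b' 0 + b 0 * (2 * B2)) - 12 * ((a' 0 * a 0 + a 0 * a' 0) * a' 0 + a 0 * a 0 * (2 * A2))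
       + (2 * E2 * r + e' 0 * q) + (e' 0 * q + e 0 * (2 * p))) (at 0)"
    unfolding G'_def
    by (rule derivative_eq_intros cubic_has_real_derivative da[OF h0] db[OF h0] de[OF h0] dda ddb dde refl | simp add: cubic_real algebra_simps)+
  from DERIV_unique[OF this zero_deriv[of G' 0]]
  have G'': "54 * (b' 0 * b' 0 + b 0 * (2 * B2)) - 12 * ((a' 0 * a 0 + a 0 * a' 0) * a' 0 + a 0 * a 0 * (2 * A2))
       + (2 * E2 * r + e' 0 * q) + (e' 0 * q + e 0 * (2 * p)) = 0"
    using G' h0 by auto
  show "27 * b 0^2 = 4 * a 0^3 - e 0 * r"
    using G[OF h0] by (simp add: G_def cubic_real power2_eq_square power3_eq_cube)
  show "54 * b 0 * b' 0 = 12 * a 0^2 * a' 0 - (e 0 * q + e' 0 * r)"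
    using G'[OF h0] by (simp add: G'_def cubic_real power2_eq_square algebra_simps)
  show "27 * b' 0^2 = 12 * a 0 * a' 0^2 + 12 * a 0^2 * A2 - 54 * b 0 * B2 - (e 0 * p + e' 0 * q + E2 * r)"
    using G'' by (simp add: power2_eq_square algebra_simps)
qed

text \<open>Square the second identity and eliminate B0^2 and B1^2 with the other two.\<close>

lemma discriminant_coefficient_identity:
  fixes u A1 B0 B1 D0 D1 X :: real
  assumes i: "27*B0^2 = 4*u^3 - D0" and ii: "54*B0*B1 = 12*u^2*A1 - D1"
    and iii: "27*B1^2 = 12*u*A1^2 + X"
  shows "48*u^4*A1^2 = D1^2 - 24*u^2*A1*D1 - 16*u^3*X + 4*D0*(12*u*A1^2 + X)"
proof -
  have "(12*u^2*A1 - D1)^2 = 4*(4*u^3 - D0)*(12*u*A1^2 + X)"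
    using i ii iii by algebra
  then show ?thesis by algebra
qed

lemma constant_coeff_small_B0:
  fixes u B0 D0 \<kappa> \<theta> :: real
  assumes B0: "27*B0^2 = 4*u^3 - D0" and D0: "\<bar>D0\<bar> \<le> \<kappa>*u^3" and \<kappa>: "\<kappa> \<le> 1"
    and u: "0 \<le> u" "u \<le> \<theta>^2" and \<theta>: "0 \<le> \<theta>"
  shows "\<bar>B0\<bar> \<le> \<theta>*u"
proof -
  have "\<kappa>*u^3 \<le> 1*u^3" using \<kappa> u by (intro mult_right_mono) auto
  then have "27*B0^2 \<le> 5*u^3" using B0 D0 abs_ge_minus_self[of D0] by linarith
  also have "\<dots> = (5*u)*u^2" by (simp add: power2_eq_square power3_eq_cube)
  also have "\<dots> \<le> (27*\<theta>^2)*u^2" using u by (intro mult_right_mono) auto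
  finally have "\<bar>B0\<bar>^2 \<le> (\<theta>*u)^2" by (simp add: power_mult_distrib)
  then show ?thesis by (rule power2_le_imp_le) (use \<theta> u in simp)
qed

lemma abs_sum_le: "0 \<le> b \<Longrightarrow> \<bar>b - a - c + d\<bar> \<le> \<bar>a\<bar> + b + \<bar>c\<bar> + \<bar>d::real\<bar>"
  by linarith

lemma constant_coeff_remainder_bound:
  fixes u A1 D0 D1 X \<kappa> \<theta> c2 \<sigma> :: real
  assumes A1: "\<bar>A1\<bar> \<le> c2" and D0: "\<bar>D0\<bar> \<le> \<kappa>*u^3" and D1: "\<bar>D1\<bar> \<le> \<kappa>*u^2"
    and X: "\<bar>X\<bar> \<le> \<theta>*\<sigma>*u" and \<kappa>: "0 \<le> \<kappa>" "\<kappa> \<le> \<theta>" "\<theta> \<le> 1" and u: "0 \<le> u" and \<sigma>: "0 \<le> \<sigma>"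
  shows "\<bar>D1^2 - 24*u^2*A1*D1 - 16*u^3*X + 4*D0*(12*u*A1^2 + X)\<bar>
    \<le> \<theta> * (24*c2 + 1 + 16*\<sigma> + 4*(12*c2^2 + \<sigma>)) * u^4"
proof -
  have c2: "0 \<le> c2" using A1 by linarith
  have "\<bar>24*u^2*A1*D1\<bar> = 24*u^2*(\<bar>A1\<bar>*\<bar>D1\<bar>)" by (simp add: abs_mult)
  also have "\<dots> \<le> 24*u^2*(c2*(\<kappa>*u^2))" using A1 D1 c2 by (intro mult_left_mono mult_mono) auto
  also have "\<dots> = (\<kappa>*c2)*(24*u^4)" by (simp add: power4_eq_xxxx power2_eq_square mult_ac)
  also have "\<dots> \<le> (\<theta>*c2)*(24*u^4)" using \<kappa> c2 u by (intro mult_right_mono) auto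
  finally have t1: "\<bar>24*u^2*A1*D1\<bar> \<le> \<theta>*(24*c2)*u^4" by simp
  have "D1^2 \<le> (\<kappa>*u^2)^2" using D1 by (metis abs_ge_zero power2_abs power_mono)
  also have "\<dots> = (\<kappa>*\<kappa>)*u^4" by (simp add: power4_eq_xxxx power2_eq_square mult_ac)
  also have "\<dots> \<le> \<theta>*u^4" using \<kappa> u mult_mono[of \<kappa> \<theta> \<kappa> 1] by (intro mult_right_mono) auto
  finally have t2: "D1^2 \<le> \<theta>*u^4" .
  have "\<bar>16*u^3*X\<bar> = 16*u^3*\<bar>X\<bar>" using u by (simp add: abs_mult)
  also have "\<dots> \<le> 16*u^3*(\<theta>*\<sigma>*u)" using X u by (intro mult_left_mono) auto
  also have "\<dots> = \<theta>*(16*\<sigma>)*u^4" by (simp add: power4_eq_xxxx power3_eq_cube mult_ac)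
  finally have t3: "\<bar>16*u^3*X\<bar> \<le> \<theta>*(16*\<sigma>)*u^4" .
  have "A1^2 \<le> c2^2" using A1 by (metis abs_ge_zero power2_abs power_mono)
  then have "\<bar>12*u*A1^2\<bar> \<le> 12*u*c2^2" using u by (simp add: abs_mult mult_left_mono)
  moreover have "\<theta>*\<sigma>*u \<le> \<sigma>*u" using mult_right_mono[of \<theta> 1 "\<sigma>*u"] \<kappa> \<sigma> u by (simp add: mult.assoc)
  ultimately have "\<bar>12*u*A1^2 + X\<bar> \<le> (12*c2^2 + \<sigma>)*u" using X by (simp add: algebra_simps abs_le_iff)
  then have "\<bar>4*D0*(12*u*A1^2 + X)\<bar> \<le> 4*(\<kappa>*u^3)*((12*c2^2 + \<sigma>)*u)"
    unfolding abs_mult using D0 by (intro mult_mono) auto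
  also have "\<dots> = \<kappa>*(4*(12*c2^2 + \<sigma>))*u^4" by (simp add: power4_eq_xxxx power3_eq_cube mult_ac)
  also have "\<dots> \<le> \<theta>*(4*(12*c2^2 + \<sigma>))*u^4" using \<kappa> c2 \<sigma> u by (intro mult_right_mono) auto
  finally have t4: "\<bar>4*D0*(12*u*A1^2 + X)\<bar> \<le> \<theta>*(4*(12*c2^2 + \<sigma>))*u^4" .
  have "\<bar>D1^2 - 24*u^2*A1*D1 - 16*u^3*X + 4*D0*(12*u*A1^2 + X)\<bar>
      \<le> \<bar>24*u^2*A1*D1\<bar> + D1^2 + \<bar>16*u^3*X\<bar> + \<bar>4*D0*(12*u*A1^2 + X)\<bar>"
    by (rule abs_sum_le) simp
  also have "\<dots> \<le> \<theta>*(24*c2)*u^4 + \<theta>*u^4 + \<theta>*(16*\<sigma>)*u^4 + \<theta>*(4*(12*c2^2 + \<sigma>))*u^4"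
    using t1 t2 t3 t4 by linarith
  finally show ?thesis by (simp add: algebra_simps)
qed

text \<open>For u > 0 the identity bounds 48 u^4 A1^2 by a small multiple of u^4, contradicting A1 \<ge> c1.\<close>

lemma constant_coeff_eq_zero:
  fixes u A1 A2 B0 B1 B2 D0 D1 D2 c1 c2 K \<kappa> \<theta> :: real
  assumes i: "27*B0^2 = 4*u^3 - D0" and ii: "54*B0*B1 = 12*u^2*A1 - D1"
    and iii: "27*B1^2 = 12*u*A1^2 + 12*u^2*A2 - 54*B0*B2 - D2"
    and u: "0 \<le> u" "u \<le> \<theta>^2" and A1: "0 < c1" "c1 \<le> A1" "A1 \<le> c2" and K: "\<bar>A2\<bar> \<le> K" "\<bar>B2\<bar> \<le> K"
    and \<kappa>: "0 \<le> \<kappa>" "\<kappa> \<le> \<theta>" "\<theta> \<le> 1"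
    and D: "\<bar>D0\<bar> \<le> \<kappa>*u^3" "\<bar>D1\<bar> \<le> \<kappa>*u^2" "\<bar>D2\<bar> \<le> \<kappa>*u"
    and small: "\<theta> * (24*c2 + 1 + 16*(66*K + 1) + 4*(12*c2^2 + 66*K + 1)) < 48*c1^2"
  shows "u = 0"
proof (rule ccontr)
  assume "u \<noteq> 0"
  then have u0: "0 < u" using u by simp
  have \<theta>: "0 \<le> \<theta>" and K0: "0 \<le> K" using \<kappa> K by linarith+
  define X where "X = 12*u^2*A2 - 54*B0*B2 - D2"
  have B0: "\<bar>B0\<bar> \<le> \<theta>*u" by (rule constant_coeff_small_B0[OF i D(1) _ u \<theta>]) (use \<kappa> in linarith)
  have "\<theta>^2 \<le> \<theta>*1" using \<theta> \<kappa> unfolding power2_eq_square by (intro mult_left_mono) auto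
  then have "u*u \<le> \<theta>*u" using u by (intro mult_right_mono) auto
  then have u2: "u^2 \<le> \<theta>*u" by (simp add: power2_eq_square)
  have X: "\<bar>X\<bar> \<le> \<theta>*(66*K + 1)*u"
  proof -
    have "u^2 * \<bar>A2\<bar> \<le> (\<theta>*u)*K" using u2 K \<theta> u by (intro mult_mono) auto
    then have "\<bar>12*u^2*A2\<bar> \<le> 12*(\<theta>*u)*K" by (simp add: abs_mult)
    moreover have "\<bar>54*B0*B2\<bar> \<le> 54*(\<theta>*u)*K" using B0 K by (simp add: abs_mult mult_mono)
    moreover have "\<bar>D2\<bar> \<le> \<theta>*u" using D(3) \<kappa> u mult_right_mono[of \<kappa> \<theta> u] by linarith
    ultimately show ?thesis unfolding X_def by (simp add: algebra_simps abs_le_iff)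
  qed
  have "48*u^4*A1^2 \<le> \<theta> * (24*c2 + 1 + 16*(66*K + 1) + 4*(12*c2^2 + (66*K + 1))) * u^4"
    using discriminant_coefficient_identity[OF i ii, of X] iii
      constant_coeff_remainder_bound[OF _ D(1,2) X \<kappa> u(1), of A1 c2] A1 K0 by (simp add: X_def)
  moreover have "c1^2 \<le> A1^2" using A1 by (intro power_mono) auto
  then have "48*c1^2*u^4 \<le> 48*u^4*A1^2" using u0 by (simp add: mult_ac)
  ultimately have "(48*c1^2)*u^4 \<le> (\<theta> * (24*c2 + 1 + 16*(66*K + 1) + 4*(12*c2^2 + 66*K + 1)))*u^4"
    by (simp add: add.assoc)
  then show False using small u0 by simp
qed

lemma small_multiplier_exists:
  fixes c Q :: real
  assumes "0 < c"
  shows "\<exists>\<theta>>0. \<theta> \<le> 1 \<and> \<theta> * Q < c"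
proof (intro exI conjI)
  define \<theta> where "\<theta> = min 1 (c / (2 * (\<bar>Q\<bar> + 1)))"
  show "0 < \<theta>" "\<theta> \<le> 1" using assms by (auto simp: \<theta>_def)
  have "\<theta> * Q \<le> \<theta> * \<bar>Q\<bar>" using \<open>0 < \<theta>\<close> by (intro mult_left_mono) auto
  also have "\<dots> \<le> c / (2 * (\<bar>Q\<bar> + 1)) * (\<bar>Q\<bar> + 1)" using assms by (intro mult_mono) (auto simp: \<theta>_def)
  also have "\<dots> = c/2" by (simp add: field_simps)
  finally show "\<theta> * Q < c" using assms by linarith
qed

lemma power_le_scaled:
  fixes K L M u :: real
  assumes "0 \<le> M" "L*M < u" "1 \<le> L" "0 \<le> K" "1 \<le> n"
  shows "K*M^n \<le> K/L * u^n"
proof -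
  have "0 \<le> u" using assms mult_nonneg_nonneg[of L M] by linarith
  have "M^n \<le> (u/L)^n" using assms by (intro power_mono) (auto simp: field_simps)
  also have "\<dots> = u^n / L^n" by (simp add: power_divide)
  also have "\<dots> \<le> u^n / L"
    using assms \<open>0 \<le> u\<close> power_increasing[of 1 n L] by (intro divide_left_mono) auto
  finally have "K*M^n \<le> K*(u^n / L)" using assms(4) by (rule mult_left_mono)
  then show ?thesis by simp
qed

text \<open>Here u = a(0,x), A_i and B_i are the Taylor coefficients in t of a and b at t = 0, and D_k
  collects the contributions of e2 P, bounded through the root size M; the conclusion is a(0,x) \<le> L M.\<close>

lemma constant_coeff_le_root_scale:
  fixes c1 c2 K :: real
  assumes c1: "0 < c1"
  obtains L \<eta> where "0 < \<eta>"
    and "\<And>u A1 A2 B0 B1 B2 D0 D1 D2 M.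
      27*B0^2 = 4*u^3 - D0 \<Longrightarrow> 54*B0*B1 = 12*u^2*A1 - D1 \<Longrightarrow>
      27*B1^2 = 12*u*A1^2 + 12*u^2*A2 - 54*B0*B2 - D2 \<Longrightarrow>
      0 \<le> u \<Longrightarrow> u \<le> \<eta> \<Longrightarrow> c1 \<le> A1 \<Longrightarrow> A1 \<le> c2 \<Longrightarrow> \<bar>A2\<bar> \<le> K \<Longrightarrow> \<bar>B2\<bar> \<le> K \<Longrightarrow>
      0 \<le> M \<Longrightarrow> \<bar>D0\<bar> \<le> K*M^3 \<Longrightarrow> \<bar>D1\<bar> \<le> K*M^2 \<Longrightarrow> \<bar>D2\<bar> \<le> K*M \<Longrightarrow> u \<le> L*M"
proof -
  obtain \<theta> where \<theta>: "0 < \<theta>" "\<theta> \<le> 1"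
    and small: "\<theta> * (24*c2 + 1 + 16*(66*K + 1) + 4*(12*c2^2 + 66*K + 1)) < 48*c1^2"
    using small_multiplier_exists[of "48*c1^2"] c1 by auto
  define L where "L = \<bar>K\<bar>/\<theta> + 1"
  have "0 \<le> \<bar>K\<bar>/\<theta>" using \<theta> by simp
  then have L: "1 \<le> L" "0 < L" by (simp_all add: L_def)
  show thesis
  proof (rule that)
    show "0 < \<theta>^2" using \<theta> by simp
    fix u A1 A2 B0 B1 B2 D0 D1 D2 M
    assume ids: "27*B0^2 = 4*u^3 - D0" "54*B0*B1 = 12*u^2*A1 - D1"
        "27*B1^2 = 12*u*A1^2 + 12*u^2*A2 - 54*B0*B2 - D2"
      and u: "0 \<le> u" "u \<le> \<theta>^2" and A1: "c1 \<le> A1" "A1 \<le> c2" and K: "\<bar>A2\<bar> \<le> K" "\<bar>B2\<bar> \<le> K"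
      and M: "0 \<le> M" and D: "\<bar>D0\<bar> \<le> K*M^3" "\<bar>D1\<bar> \<le> K*M^2" "\<bar>D2\<bar> \<le> K*M"
    show "u \<le> L*M"
    proof (rule ccontr)
      assume "\<not> u \<le> L*M"
      then have uLM: "L*M < u" by simp
      have K0: "0 \<le> K" using K by linarith
      define \<kappa> where "\<kappa> = K/L"
      have \<kappa>: "0 \<le> \<kappa>" "\<kappa> \<le> \<theta>"
        using K0 L \<theta> by (auto simp: \<kappa>_def L_def field_simps)
      have scale: "K*M^n \<le> \<kappa>*u^n" if "1 \<le> n" for n
        unfolding \<kappa>_def by (rule power_le_scaled[OF M uLM L(1) K0 that])
      have "u = 0"
        using constant_coeff_eq_zero[OF ids u c1 A1 K \<kappa> \<theta>(2) _ _ _ small]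
          D scale[of 3] scale[of 2] scale[of 1] by simp
      then show False using uLM L M by (simp add: mult_less_0_iff)
    qed
  qed
qed

lemma disc_nonneg_imp_nonneg: "0 \<le> disc a b t x \<Longrightarrow> 0 \<le> a t x"
proof -
  assume "0 \<le> disc a b t x"
  then have "0 \<le> 4*(a t x)^3" using zero_le_power2[of "b t x"] unfolding disc_def by linarith
  then show ?thesis by (simp add: zero_le_odd_power)
qed

lemma root_weighted_coeffs_bound:
  fixes E0 E1 E2 p q r M K :: real
  assumes E: "\<bar>E0\<bar> \<le> K" "\<bar>E1\<bar> \<le> K" "\<bar>E2\<bar> \<le> K"
    and coeffs: "\<bar>p\<bar> \<le> 3*M" "\<bar>q\<bar> \<le> 3*M^2" "\<bar>r\<bar> \<le> M^3" and M: "0 \<le> M" "M \<le> 1"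
  shows "\<bar>E0*r\<bar> \<le> 7*K*M^3" "\<bar>E0*q + E1*r\<bar> \<le> 7*K*M^2" "\<bar>E0*p + E1*q + E2*r\<bar> \<le> 7*K*M"
proof -
  have K: "0 \<le> K" using E(1) by simp
  have M2: "M^2 \<le> M" using M by (simp add: power2_eq_square mult_left_le_one_le)
  have M3: "M^3 \<le> M^2" using mult_left_mono[OF M(2), of "M^2"] M by (simp add: power2_eq_square power3_eq_cube)
  have "\<bar>E0*r\<bar> \<le> K*M^3" "\<bar>E0*q\<bar> \<le> K*(3*M^2)" "\<bar>E1*r\<bar> \<le> K*M^3"
    "\<bar>E0*p\<bar> \<le> K*(3*M)" "\<bar>E1*q\<bar> \<le> K*(3*M^2)" "\<bar>E2*r\<bar> \<le> K*M^3"
    using E coeffs unfolding abs_mult by (intro mult_mono; simp)+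
  moreover have "K*M^3 \<le> K*M^2" "K*M^2 \<le> K*M" "0 \<le> K*M^3" using K M M2 M3 by (simp_all add: mult_left_mono)
  ultimately show "\<bar>E0*r\<bar> \<le> 7*K*M^3" "\<bar>E0*q + E1*r\<bar> \<le> 7*K*M^2" "\<bar>E0*p + E1*q + E2*r\<bar> \<le> 7*K*M"
    by (simp_all add: abs_le_iff)
qed

section \<open>The estimates near the origin\<close>

locale discriminant_expansion =
  fixes a b e2 :: "real \<Rightarrow> real \<Rightarrow> real" and a1 a2 a3 :: "real \<Rightarrow> real"
    and \<rho> B h0 :: real and Fa Fb Fe :: "nat \<Rightarrow> real \<Rightarrow> real"
  assumes exp_a: "geometric_expansion a \<rho> B Fa"
    and exp_b: "geometric_expansion b \<rho> B Fb"
    and exp_e: "geometric_expansion e2 \<rho> B Fe"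
    and h0: "0 < h0" "h0 \<le> 1" "h0 \<le> \<rho>/4"
    and disc_nonneg: "\<And>t x. 0 \<le> t \<Longrightarrow> t \<le> h0 \<Longrightarrow> \<bar>x\<bar> \<le> h0 \<Longrightarrow> 0 \<le> disc a b t x"
    and factorization: "\<And>t x. \<bar>t\<bar> \<le> h0 \<Longrightarrow> \<bar>x\<bar> \<le> h0 \<Longrightarrow>
      disc a b t x = e2 t x * cubic (a1 x) (a2 x) (a3 x) t"
    and e2_pos: "\<And>t x. \<bar>t\<bar> \<le> h0 \<Longrightarrow> \<bar>x\<bar> \<le> h0 \<Longrightarrow> 0 < e2 t x"
    and coeffs_cont: "isCont a1 0" "isCont a2 0" "isCont a3 0"
    and coeffs_zero: "a1 0 = 0" "a2 0 = 0" "a3 0 = 0"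
    and a_zero: "a 0 0 = 0"
    and a_slope: "\<exists>d. ((\<lambda>t. a t 0) has_real_derivative d) (at 0) \<and> d \<noteq> 0"
begin

lemma rho_pos: "0 < \<rho>" and B_nonneg: "0 \<le> B"
  using geometric_expansion_pos[OF exp_a, of 0] h0 by auto

lemma in_expansion_range: "\<bar>x\<bar> \<le> h0 \<Longrightarrow> \<bar>x\<bar> \<le> \<rho>/4"
  using h0 by linarith

lemma a_nonneg: "0 \<le> t \<Longrightarrow> t \<le> h0 \<Longrightarrow> \<bar>x\<bar> \<le> h0 \<Longrightarrow> 0 \<le> a t x"
  by (rule disc_nonneg_imp_nonneg[OF disc_nonneg])

lemma slope_pos: "0 < Fa 1 0"
proof -
  have x0: "\<bar>0\<bar> \<le> \<rho>/4" using rho_pos by simp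
  obtain d where d: "((\<lambda>t. a t 0) has_real_derivative d) (at 0)" "d \<noteq> 0" using a_slope by blast
  have "((\<lambda>t. a t 0) has_real_derivative Fa 1 0) (at 0)"
    using geometric_expansion_has_derivative[OF exp_a x0, of 0] rho_pos by (simp add: expansion_deriv_at_zero[OF exp_a x0])
  then have "Fa 1 0 \<noteq> 0" using DERIV_unique[OF d(1)] d(2) by auto
  moreover have "\<not> Fa 1 0 < 0"
  proof
    assume "Fa 1 0 < 0"
    then obtain \<epsilon> where "0 < \<epsilon>" "\<And>t. 0 < t \<Longrightarrow> t < \<epsilon> \<Longrightarrow> a t 0 < a 0 0"
      using DERIV_neg_dec_right[OF \<open>((\<lambda>t. a t 0) has_real_derivative Fa 1 0) (at 0)\<close>] by auto
    then have "a (min (\<epsilon>/2) h0) 0 < 0" using h0 a_zero by simp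
    then show False using a_nonneg[of "min (\<epsilon>/2) h0" 0] \<open>0 < \<epsilon>\<close> h0 by simp
  qed
  ultimately show ?thesis by linarith
qed

lemma e2_lower_bound:
  obtains h where "0 < h" "h \<le> h0" "\<And>s x. \<bar>s\<bar> \<le> h \<Longrightarrow> \<bar>x\<bar> \<le> h \<Longrightarrow> e2 0 0 / 2 \<le> e2 s x"
proof -
  define e0 where "e0 = e2 0 0"
  have e0: "0 < e0" using e2_pos[of 0 0] h0 by (simp add: e0_def)
  define Lip where "Lip = 2*B/\<rho> + B"
  have Lip: "0 \<le> Lip" using rho_pos B_nonneg by (simp add: Lip_def)
  have "0 < e0/2" using e0 by simp
  then obtain h where h: "0 < h" "h \<le> h0" "Lip*h \<le> e0/2" using small_radius[OF h0(1) _ Lip] by metis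
  have "e0/2 \<le> e2 s x" if s: "\<bar>s\<bar> \<le> h" and x: "\<bar>x\<bar> \<le> h" for s x
  proof -
    have xr: "\<bar>x\<bar> \<le> \<rho>/4" "\<bar>s\<bar> \<le> \<rho>/4" using s x h in_expansion_range by auto
    have "\<bar>e2 s x - Fe 0 x\<bar> \<le> 2*B*\<bar>s\<bar>/\<rho>" by (rule geometric_expansion_taylor0[OF exp_e xr])
    moreover have "\<bar>Fe 0 x - Fe 0 0\<bar> \<le> B*\<bar>x\<bar>" using geometric_expansion_coeff_lipschitz[OF exp_e xr(1), of 0] by simp
    moreover have "Fe 0 0 = e0" using geometric_expansion_at_zero[OF exp_e, of 0] rho_pos by (simp add: e0_def)
    moreover have "2*B*\<bar>s\<bar>/\<rho> + B*\<bar>x\<bar> \<le> Lip*h"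
      using s x rho_pos B_nonneg by (simp add: Lip_def algebra_simps divide_right_mono mult_left_mono add_mono)
    ultimately show ?thesis using h(3) by (simp add: abs_le_iff)
  qed
  then show ?thesis using that h(1,2) by (simp add: e0_def)
qed


lemma a_bounds_at:
  defines "c \<equiv> Fa 1 0" and "C1 \<equiv> B/\<rho> + 2*B/\<rho>^2"
  assumes h: "0 < h" "h \<le> h0" "C1*h \<le> c/2" and t: "0 \<le> t" "t \<le> h" and x: "\<bar>x\<bar> \<le> h"
  shows "c/2 * t \<le> a t x \<and> a t x \<le> a 0 x + C1 * t \<and> c/2 \<le> Fa 1 x"
proof -
  have xr: "\<bar>x\<bar> \<le> \<rho>/4" "\<bar>t\<bar> \<le> \<rho>/4"
    using t x h in_expansion_range[of x] in_expansion_range[of t] by auto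
  define k where "k = 2*B/\<rho>^2"
  have k: "0 \<le> k" using rho_pos B_nonneg by (simp add: k_def)
  have "2*B*t^2/\<rho>^2 = k*(t*t)" by (simp add: k_def power2_eq_square)
  also have "\<dots> \<le> k*(h*t)" using k t by (intro mult_left_mono mult_right_mono) auto
  finally have taylor: "\<bar>a t x - Fa 0 x - Fa 1 x * t\<bar> \<le> k*(h*t)"
    using geometric_expansion_taylor1[OF exp_a xr] by linarith
  have Fa0: "a 0 x = Fa 0 x" "0 \<le> Fa 0 x"
    using geometric_expansion_at_zero[OF exp_a xr(1)] a_nonneg[of 0 x] x h by auto
  have "\<bar>Fa 1 x - c\<bar> \<le> B/\<rho> * h"
    using geometric_expansion_coeff_lipschitz[OF exp_a xr(1), of 1] x rho_pos B_nonneg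
      mult_left_mono[of "\<bar>x\<bar>" h "B/\<rho>"] by (simp add: c_def)
  moreover have C1h: "C1*h = B/\<rho> * h + k*h" by (simp add: C1_def k_def algebra_simps)
  moreover have "0 \<le> k*h" using k h by simp
  ultimately have Fa1: "c/2 \<le> Fa 1 x" using h(3) by (simp add: abs_le_iff)
  have lower: "c/2 * t \<le> a t x"
  proof -
    have "(c/2 + k*h) * t \<le> Fa 1 x * t"
      using \<open>\<bar>Fa 1 x - c\<bar> \<le> B/\<rho> * h\<close> h(3) C1h t by (intro mult_right_mono) (auto simp: abs_le_iff)
    then show ?thesis using taylor Fa0 by (simp add: abs_le_iff algebra_simps)
  qed
  have upper: "a t x \<le> a 0 x + C1 * t"
  proof -
    have "Fa 1 x * t \<le> B/\<rho> * t"
      using geometric_expansion_coeff_bound[OF exp_a xr(1), of 1] t by (intro mult_right_mono) auto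
    moreover have "k*(h*t) \<le> k*(1*t)" using k t h h0 by (intro mult_left_mono mult_right_mono) auto
    ultimately have "Fa 1 x * t + k*(h*t) \<le> (B/\<rho> + k) * t" by (simp add: distrib_right)
    then show ?thesis using taylor Fa0 by (simp add: abs_le_iff C1_def k_def)
  qed
  show ?thesis using lower upper Fa1 by blast
qed

lemma a_linear_bounds:
  obtains h where "0 < h" "h \<le> h0"
    and "\<And>t x. 0 \<le> t \<Longrightarrow> t \<le> h \<Longrightarrow> \<bar>x\<bar> \<le> h \<Longrightarrow>
      Fa 1 0 / 2 * t \<le> a t x \<and> a t x \<le> a 0 x + (B/\<rho> + 2*B/\<rho>^2) * t \<and> Fa 1 0 / 2 \<le> Fa 1 x"
proof -
  have "0 \<le> B/\<rho> + 2*B/\<rho>^2" "0 < Fa 1 0 / 2" using rho_pos B_nonneg slope_pos by simp_all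
  then obtain h where "0 < h" "h \<le> h0" "(B/\<rho> + 2*B/\<rho>^2)*h \<le> Fa 1 0 / 2"
    using small_radius[OF h0(1)] by metis
  then show ?thesis using that a_bounds_at by blast
qed

lemma taylor_identities_at:
  assumes x: "\<bar>x\<bar> \<le> h0"
  shows "27 * Fb 0 x^2 = 4 * Fa 0 x^3 - Fe 0 x * a3 x"
    and "54 * Fb 0 x * Fb 1 x = 12 * Fa 0 x^2 * Fa 1 x - (Fe 0 x * a2 x + Fe 1 x * a3 x)"
    and "27 * Fb 1 x^2 = 12 * Fa 0 x * Fa 1 x^2 + 12 * Fa 0 x^2 * Fa 2 x - 54 * Fb 0 x * Fb 2 x
      - (Fe 0 x * a1 x + Fe 1 x * a2 x + Fe 2 x * a3 x)"
proof -
  have xr: "\<bar>x\<bar> \<le> \<rho>/4" using x by (rule in_expansion_range)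
  have s: "\<bar>s\<bar> < \<rho>" if "\<bar>s\<bar> < h0" for s using that h0 rho_pos by linarith
  have "4 * a s x^3 - 27 * b s x^2 = e2 s x * cubic (a1 x) (a2 x) (a3 x) s" if "\<bar>s\<bar> < h0" for s
    using factorization[of s x] that x by (simp add: disc_def)
  note ids = discriminant_taylor_identities[where a="\<lambda>s. a s x" and b="\<lambda>s. b s x" and e="\<lambda>s. e2 s x"
      and a'="expansion_deriv Fa x" and b'="expansion_deriv Fb x" and e'="expansion_deriv Fe x",
      OF h0(1) this geometric_expansion_has_derivative[OF exp_a xr s] geometric_expansion_has_derivative[OF exp_b xr s]
      geometric_expansion_has_derivative[OF exp_e xr s] expansion_deriv_has_derivative_at_zero[OF exp_a xr]
      expansion_deriv_has_derivative_at_zero[OF exp_b xr] expansion_deriv_has_derivative_at_zero[OF exp_e xr]]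
  from ids show "27 * Fb 0 x^2 = 4 * Fa 0 x^3 - Fe 0 x * a3 x"
    and "54 * Fb 0 x * Fb 1 x = 12 * Fa 0 x^2 * Fa 1 x - (Fe 0 x * a2 x + Fe 1 x * a3 x)"
    and "27 * Fb 1 x^2 = 12 * Fa 0 x * Fa 1 x^2 + 12 * Fa 0 x^2 * Fa 2 x - 54 * Fb 0 x * Fb 2 x
      - (Fe 0 x * a1 x + Fe 1 x * a2 x + Fe 2 x * a3 x)"
    by (simp_all add: geometric_expansion_at_zero[OF exp_a xr] geometric_expansion_at_zero[OF exp_b xr]
        geometric_expansion_at_zero[OF exp_e xr] expansion_deriv_at_zero[OF exp_a xr]
        expansion_deriv_at_zero[OF exp_b xr] expansion_deriv_at_zero[OF exp_e xr])
qed

lemma constant_term_le_root_scale: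
  obtains L \<eta> where "0 < \<eta>"
    and "\<And>x M. \<bar>x\<bar> \<le> h0 \<Longrightarrow> Fa 1 0 / 2 \<le> Fa 1 x \<Longrightarrow> a 0 x \<le> \<eta> \<Longrightarrow> 0 \<le> M \<Longrightarrow> M \<le> 1 \<Longrightarrow>
      \<bar>a1 x\<bar> \<le> 3*M \<Longrightarrow> \<bar>a2 x\<bar> \<le> 3*M^2 \<Longrightarrow> \<bar>a3 x\<bar> \<le> M^3 \<Longrightarrow> a 0 x \<le> L*M"
proof -
  define KE where "KE = B + B/\<rho> + B/\<rho>^2"
  have KE: "B/\<rho>^i \<le> KE" if "i \<le> 2" for i
    using that rho_pos B_nonneg by (auto simp: KE_def le_Suc_eq numeral_2_eq_2)
  have "0 < Fa 1 0 / 2" using slope_pos by simp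
  then obtain \<eta> L where "0 < \<eta>" and crux: "\<And>u A1 A2 B0 B1 B2 D0 D1 D2 M.
      27*B0^2 = 4*u^3 - D0 \<Longrightarrow> 54*B0*B1 = 12*u^2*A1 - D1 \<Longrightarrow>
      27*B1^2 = 12*u*A1^2 + 12*u^2*A2 - 54*B0*B2 - D2 \<Longrightarrow>
      0 \<le> u \<Longrightarrow> u \<le> \<eta> \<Longrightarrow> Fa 1 0 / 2 \<le> A1 \<Longrightarrow> A1 \<le> B/\<rho> \<Longrightarrow> \<bar>A2\<bar> \<le> 7*KE \<Longrightarrow> \<bar>B2\<bar> \<le> 7*KE \<Longrightarrow>
      0 \<le> M \<Longrightarrow> \<bar>D0\<bar> \<le> 7*KE*M^3 \<Longrightarrow> \<bar>D1\<bar> \<le> 7*KE*M^2 \<Longrightarrow> \<bar>D2\<bar> \<le> 7*KE*M \<Longrightarrow> u \<le> L*M"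
    by (rule constant_coeff_le_root_scale[of "Fa 1 0 / 2" "B/\<rho>" "7*KE"]) blast
  show thesis
  proof (rule that[OF \<open>0 < \<eta>\<close>])
    fix x M assume x: "\<bar>x\<bar> \<le> h0" and A1: "Fa 1 0 / 2 \<le> Fa 1 x" and u: "a 0 x \<le> \<eta>"
      and M: "0 \<le> M" "M \<le> 1" and coeffs: "\<bar>a1 x\<bar> \<le> 3*M" "\<bar>a2 x\<bar> \<le> 3*M^2" "\<bar>a3 x\<bar> \<le> M^3"
    have xr: "\<bar>x\<bar> \<le> \<rho>/4" using x by (rule in_expansion_range)
    note bound = geometric_expansion_coeff_bound[OF _ xr]
    have EK: "\<bar>Fe i x\<bar> \<le> KE" if "i \<le> 2" for i using bound[OF exp_e, of i] KE[OF that] by linarith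
    have "\<bar>Fa 2 x\<bar> \<le> 7*KE" "\<bar>Fb 2 x\<bar> \<le> 7*KE"
      using bound[OF exp_a, of 2] bound[OF exp_b, of 2] KE[of 2] KE[of 0] B_nonneg by simp_all
    moreover have "Fa 1 x \<le> B/\<rho>" using bound[OF exp_a, of 1] by simp
    moreover have "a 0 x = Fa 0 x" "0 \<le> a 0 x"
      using geometric_expansion_at_zero[OF exp_a xr] a_nonneg[of 0 x] x h0 by auto
    ultimately show "a 0 x \<le> L*M"
      using crux[OF taylor_identities_at[OF x] _ _ A1 _ _ _ M(1) root_weighted_coeffs_bound[OF EK[of 0] EK[of 1] EK[of 2] coeffs M]] u
      by (simp add: mult.assoc)
  qed
qed

lemma deriv_disc:
  assumes t: "\<bar>t\<bar> < h0" and x: "\<bar>x\<bar> \<le> h0"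
  shows "deriv (\<lambda>s. disc a b s x) t =
    expansion_deriv Fe x t * cubic (a1 x) (a2 x) (a3 x) t + (3*t^2 + 2*a1 x*t + a2 x) * e2 t x"
proof (rule DERIV_imp_deriv, rule has_field_derivative_transform_within_open[where S="{-h0<..<h0}"])
  have xr: "\<bar>x\<bar> \<le> \<rho>/4" using x by (rule in_expansion_range)
  have "\<bar>t\<bar> < \<rho>" using t h0 by linarith
  then show "((\<lambda>s. e2 s x * cubic (a1 x) (a2 x) (a3 x) s) has_real_derivative
      expansion_deriv Fe x t * cubic (a1 x) (a2 x) (a3 x) t + (3*t^2 + 2*a1 x*t + a2 x) * e2 t x) (at t)"
    by (rule DERIV_mult[OF geometric_expansion_has_derivative[OF exp_e xr] cubic_has_real_derivative])
qed (use t x factorization in auto)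


lemma cubic_bounds_at:
  assumes h: "0 < h" "h \<le> h0" and x: "\<bar>x\<bar> \<le> h"
    and small: "\<bar>a1 x\<bar> \<le> (h/4)/3" "\<bar>a2 x\<bar> \<le> (h/4)^2/3" "\<bar>a3 x\<bar> \<le> (h/4)^3/3"
  obtains M where "0 \<le> M" "M \<le> 1" "\<bar>a1 x\<bar> \<le> 3*M" "\<bar>a2 x\<bar> \<le> 3*M^2" "\<bar>a3 x\<bar> \<le> M^3"
    and "psi a1 a2 a3 x \<le> h/4"
    and "\<And>t \<phi>. 0 \<le> t \<Longrightarrow> t < h \<Longrightarrow>
      (t \<le> psi a1 a2 a3 x / 2 \<and> \<phi> = t) \<or> (psi a1 a2 a3 x / 2 \<le> t \<and> \<phi> = t - psi a1 a2 a3 x) \<Longrightarrow>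
      \<bar>\<phi>\<bar> \<le> t \<and> \<bar>\<phi>\<bar> * \<bar>3*t^2 + 2*a1 x*t + a2 x\<bar> \<le> 3 * cubic (a1 x) (a2 x) (a3 x) t \<and>
      \<phi>^2 * (t + M) \<le> 3 * cubic (a1 x) (a2 x) (a3 x) t"
proof -
  have xh: "\<bar>x\<bar> \<le> h0" using x h by linarith
  have "0 \<le> cubic (a1 x) (a2 x) (a3 x) s" if "0 \<le> s" "s < h" for s :: real
    using disc_nonneg[of s x] factorization[of s x] e2_pos[of s x] that h xh by (simp add: zero_le_mult_iff)
  moreover have "psi a1 a2 a3 x = max 0 (Max (Re ` {z::complex. cubic (a1 x) (a2 x) (a3 x) z = 0}))"
    by (simp add: psi_def wroots_def cubic_def)
  ultimately obtain M where "0 \<le> M" "M \<le> h/4" "\<bar>a1 x\<bar> \<le> 3*M" "\<bar>a2 x\<bar> \<le> 3*M^2" "\<bar>a3 x\<bar> \<le> M^3"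
    "psi a1 a2 a3 x \<le> h/4" "\<And>t \<phi>. 0 \<le> t \<Longrightarrow> t < h \<Longrightarrow>
      (t \<le> psi a1 a2 a3 x / 2 \<and> \<phi> = t) \<or> (psi a1 a2 a3 x / 2 \<le> t \<and> \<phi> = t - psi a1 a2 a3 x) \<Longrightarrow>
      \<bar>\<phi>\<bar> \<le> t \<and> \<bar>\<phi>\<bar> * \<bar>3*t^2 + 2*a1 x*t + a2 x\<bar> \<le> 3 * cubic (a1 x) (a2 x) (a3 x) t \<and>
      \<phi>^2 * (t + M) \<le> 3 * cubic (a1 x) (a2 x) (a3 x) t"
    using cubic_estimates[OF _ h(1) small] by blast
  moreover have "h/4 \<le> 1" using h h0 by simp
  ultimately show ?thesis using that by force
qed

lemma deriv_disc_bound: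
  assumes t: "0 \<le> t" "t < h0" and x: "\<bar>x\<bar> \<le> h0" and \<phi>: "\<bar>\<phi>\<bar> \<le> t"
    and est: "\<bar>\<phi>\<bar> * \<bar>3*t^2 + 2*a1 x*t + a2 x\<bar> \<le> 3 * cubic (a1 x) (a2 x) (a3 x) t"
    and E0: "0 < E0" "E0 \<le> e2 t x"
  shows "\<bar>\<phi>\<bar> * \<bar>deriv (\<lambda>s. disc a b s x) t\<bar> \<le> (t*(2*B/\<rho>)/E0 + 3) * disc a b t x"
proof -
  define cub :: "real \<Rightarrow> real" where "cub = cubic (a1 x) (a2 x) (a3 x)"
  define P' where "P' = 3*t^2 + 2*a1 x*t + a2 x"
  define D where "D = expansion_deriv Fe x t"
  have \<Delta>: "disc a b t x = e2 t x * cub t" using factorization[of t x] t x by (simp add: cub_def)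
  have cub_t: "0 \<le> cub t" using disc_nonneg[of t x] \<Delta> E0 t x by (simp add: zero_le_mult_iff)
  have cub_le: "cub t \<le> disc a b t x / E0"
    using mult_right_mono[OF E0(2) cub_t] E0(1) by (simp add: \<Delta> field_simps)
  have "\<bar>t\<bar> < h0" using t by simp
  then have "\<bar>t\<bar> \<le> \<rho>/4" using in_expansion_range[of t] by simp
  then have "\<bar>D\<bar> \<le> 2*B/\<rho>" unfolding D_def by (rule expansion_deriv_bound[OF exp_e in_expansion_range[OF x]])
  then have "\<bar>\<phi>\<bar> * \<bar>D\<bar> \<le> t * (2*B/\<rho>)" using \<phi> t by (intro mult_mono) auto
  have "\<bar>D * cub t + P' * e2 t x\<bar> \<le> \<bar>D\<bar> * cub t + \<bar>P'\<bar> * e2 t x"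
    using abs_triangle_ineq[of "D * cub t" "P' * e2 t x"] cub_t E0 by (simp add: abs_mult)
  then have "\<bar>\<phi>\<bar> * \<bar>deriv (\<lambda>s. disc a b s x) t\<bar> \<le> \<bar>\<phi>\<bar> * (\<bar>D\<bar> * cub t + \<bar>P'\<bar> * e2 t x)"
    unfolding deriv_disc[OF \<open>\<bar>t\<bar> < h0\<close> x] by (intro mult_left_mono) (auto simp: cub_def D_def P'_def)
  also have "\<dots> = (\<bar>\<phi>\<bar> * \<bar>D\<bar>) * cub t + (\<bar>\<phi>\<bar> * \<bar>P'\<bar>) * e2 t x" by (simp add: algebra_simps)
  also have "\<dots> \<le> (t * (2*B/\<rho>)) * (disc a b t x / E0) + (3 * cub t) * e2 t x"
  proof (rule add_mono)
    show "(\<bar>\<phi>\<bar> * \<bar>D\<bar>) * cub t \<le> (t * (2*B/\<rho>)) * (disc a b t x / E0)"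
      by (rule mult_mono[OF \<open>\<bar>\<phi>\<bar> * \<bar>D\<bar> \<le> t * (2*B/\<rho>)\<close> cub_le]) (use t rho_pos B_nonneg cub_t in auto)
    show "(\<bar>\<phi>\<bar> * \<bar>P'\<bar>) * e2 t x \<le> (3 * cub t) * e2 t x"
      using est E0 unfolding P'_def cub_def by (intro mult_right_mono) auto
  qed
  also have "\<dots> = (t*(2*B/\<rho>)/E0 + 3) * disc a b t x" by (simp add: \<Delta> field_simps)
  finally show ?thesis .
qed

lemma estimates_at:
  assumes h: "0 < h" "h \<le> h0" and x: "\<bar>x\<bar> \<le> h"
    and E0: "0 < E0" "\<And>s. \<bar>s\<bar> \<le> h \<Longrightarrow> E0 \<le> e2 s x"
    and a_lower: "0 < k" "\<And>t. 0 \<le> t \<Longrightarrow> t \<le> h \<Longrightarrow> k*t \<le> a t x"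
    and a_upper: "0 \<le> A" "\<And>t M. 0 \<le> t \<Longrightarrow> t \<le> h \<Longrightarrow> 0 \<le> M \<Longrightarrow> M \<le> 1 \<Longrightarrow>
      \<bar>a1 x\<bar> \<le> 3*M \<Longrightarrow> \<bar>a2 x\<bar> \<le> 3*M^2 \<Longrightarrow> \<bar>a3 x\<bar> \<le> M^3 \<Longrightarrow> a t x \<le> A*(t + M)"
    and small: "\<bar>a1 x\<bar> \<le> (h/4)/3" "\<bar>a2 x\<bar> \<le> (h/4)^2/3" "\<bar>a3 x\<bar> \<le> (h/4)^3/3"
    and C: "3*A/E0 + h*(2*B/\<rho>)/E0 + 3 + 1/k \<le> C"
    and t: "0 \<le> t"
    and region: "(t \<le> psi a1 a2 a3 x / 2 \<and> \<phi> = t) \<or>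
      (psi a1 a2 a3 x / 2 \<le> t \<and> t \<le> h/2 \<and> \<phi> = t - psi a1 a2 a3 x)"
  shows "\<phi>^2 * a t x \<le> C * disc a b t x"
    and "\<bar>\<phi>\<bar> * \<bar>deriv (\<lambda>s. disc a b s x) t\<bar> \<le> C * disc a b t x"
    and "\<bar>\<phi>\<bar> \<le> C * a t x"
proof -
  obtain M where M: "0 \<le> M" "M \<le> 1" "\<bar>a1 x\<bar> \<le> 3*M" "\<bar>a2 x\<bar> \<le> 3*M^2" "\<bar>a3 x\<bar> \<le> M^3"
    and \<psi>: "psi a1 a2 a3 x \<le> h/4"
    and cub: "\<And>t \<phi>. 0 \<le> t \<Longrightarrow> t < h \<Longrightarrow>
      (t \<le> psi a1 a2 a3 x / 2 \<and> \<phi> = t) \<or> (psi a1 a2 a3 x / 2 \<le> t \<and> \<phi> = t - psi a1 a2 a3 x) \<Longrightarrow>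
      \<bar>\<phi>\<bar> \<le> t \<and> \<bar>\<phi>\<bar> * \<bar>3*t^2 + 2*a1 x*t + a2 x\<bar> \<le> 3 * cubic (a1 x) (a2 x) (a3 x) t \<and>
      \<phi>^2 * (t + M) \<le> 3 * cubic (a1 x) (a2 x) (a3 x) t"
    using cubic_bounds_at[OF h x small] by blast
  have th: "t < h" using region \<psi> h by auto
  have xh: "\<bar>x\<bar> \<le> h0" and th0: "t < h0" using x th h by linarith+
  have \<phi>t: "\<bar>\<phi>\<bar> \<le> t" and est: "\<bar>\<phi>\<bar> * \<bar>3*t^2 + 2*a1 x*t + a2 x\<bar> \<le> 3 * cubic (a1 x) (a2 x) (a3 x) t"
    "\<phi>^2 * (t + M) \<le> 3 * cubic (a1 x) (a2 x) (a3 x) t"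
    using cub[OF t th, of \<phi>] region by auto
  have E0t: "E0 \<le> e2 t x" using E0(2)[of t] t th by simp
  have \<Delta>0: "0 \<le> disc a b t x" using disc_nonneg[of t x] t th0 xh by simp
  have cub_le: "cubic (a1 x) (a2 x) (a3 x) t \<le> disc a b t x / E0"
    using factorization[of t x] E0(1) E0t \<Delta>0 t th0 xh
    by (simp add: field_simps zero_le_mult_iff mult_right_mono)
  have "t*(2*B/\<rho>)/E0 \<le> h*(2*B/\<rho>)/E0"
    using th t E0(1) rho_pos B_nonneg by (intro divide_right_mono mult_right_mono) auto
  moreover have "0 \<le> 3*A/E0" "0 \<le> t*(2*B/\<rho>)/E0" "0 \<le> 1/k"
    using a_upper(1) E0(1) t rho_pos B_nonneg a_lower(1) by simp_all
  ultimately have C_parts: "3*A/E0 \<le> C" "t*(2*B/\<rho>)/E0 + 3 \<le> C" "1/k \<le> C" using C by linarith+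
  have "\<phi>^2 * a t x \<le> A * (\<phi>^2 * (t + M))"
    using mult_left_mono[OF a_upper(2)[OF t _ M], of "\<phi>^2"] th by (simp add: mult.left_commute)
  also have "\<dots> \<le> A * (3 * (disc a b t x / E0))"
    using est(2) cub_le a_upper(1) by (intro mult_left_mono) auto
  also have "\<dots> = (3*A/E0) * disc a b t x" by simp
  also have "\<dots> \<le> C * disc a b t x" using C_parts(1) \<Delta>0 by (rule mult_right_mono)
  finally show "\<phi>^2 * a t x \<le> C * disc a b t x" .
  have "\<bar>\<phi>\<bar> * \<bar>deriv (\<lambda>s. disc a b s x) t\<bar> \<le> (t*(2*B/\<rho>)/E0 + 3) * disc a b t x"
    by (rule deriv_disc_bound[OF t th0 xh \<phi>t est(1) E0(1) E0t])
  also have "\<dots> \<le> C * disc a b t x" using C_parts(2) \<Delta>0 by (rule mult_right_mono)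
  finally show "\<bar>\<phi>\<bar> * \<bar>deriv (\<lambda>s. disc a b s x) t\<bar> \<le> C * disc a b t x" .
  have kt: "k*t \<le> a t x" using a_lower(2)[OF t] th by simp
  then have "t \<le> (1/k) * a t x" using a_lower(1) by (simp add: field_simps)
  also have "\<dots> \<le> C * a t x"
  proof (rule mult_right_mono[OF C_parts(3)])
    show "0 \<le> a t x" using kt mult_nonneg_nonneg[of k t] a_lower(1) t by linarith
  qed
  finally show "\<bar>\<phi>\<bar> \<le> C * a t x" using \<phi>t by linarith
qed

lemma a_zero_le: "\<bar>x\<bar> \<le> h0 \<Longrightarrow> a 0 x \<le> B * \<bar>x\<bar>"
  using geometric_expansion_coeff_lipschitz[OF exp_a in_expansion_range, of x 0]
    geometric_expansion_at_zero[OF exp_a in_expansion_range, of x]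
    geometric_expansion_at_zero[OF exp_a, of 0] rho_pos a_zero by simp

lemma near_origin_bounds:
  obtains h A \<eta> where "0 < h" "h \<le> h0" "0 \<le> A" "0 < \<eta>"
    and "\<And>s x. \<bar>s\<bar> \<le> h \<Longrightarrow> \<bar>x\<bar> \<le> h \<Longrightarrow> e2 0 0 / 2 \<le> e2 s x"
    and "\<And>t x. 0 \<le> t \<Longrightarrow> t \<le> h \<Longrightarrow> \<bar>x\<bar> \<le> h \<Longrightarrow> Fa 1 0 / 2 * t \<le> a t x"
    and "\<And>t x M. 0 \<le> t \<Longrightarrow> t \<le> h \<Longrightarrow> \<bar>x\<bar> \<le> h \<Longrightarrow> a 0 x \<le> \<eta> \<Longrightarrow> 0 \<le> M \<Longrightarrow> M \<le> 1 \<Longrightarrow>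
      \<bar>a1 x\<bar> \<le> 3*M \<Longrightarrow> \<bar>a2 x\<bar> \<le> 3*M^2 \<Longrightarrow> \<bar>a3 x\<bar> \<le> M^3 \<Longrightarrow> a t x \<le> A*(t + M)"
proof -
  obtain h1 where h1: "0 < h1" "h1 \<le> h0" "\<And>s x. \<bar>s\<bar> \<le> h1 \<Longrightarrow> \<bar>x\<bar> \<le> h1 \<Longrightarrow> e2 0 0 / 2 \<le> e2 s x"
    using e2_lower_bound by blast
  define C1 where "C1 = B/\<rho> + 2*B/\<rho>^2"
  obtain h2 where h2: "0 < h2" "h2 \<le> h0" and lin: "\<And>t x. 0 \<le> t \<Longrightarrow> t \<le> h2 \<Longrightarrow> \<bar>x\<bar> \<le> h2 \<Longrightarrow>
      Fa 1 0 / 2 * t \<le> a t x \<and> a t x \<le> a 0 x + C1 * t \<and> Fa 1 0 / 2 \<le> Fa 1 x"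
    unfolding C1_def by (rule a_linear_bounds) blast
  obtain \<eta> L where \<eta>: "0 < \<eta>" and const: "\<And>x M. \<bar>x\<bar> \<le> h0 \<Longrightarrow> Fa 1 0 / 2 \<le> Fa 1 x \<Longrightarrow> a 0 x \<le> \<eta> \<Longrightarrow>
      0 \<le> M \<Longrightarrow> M \<le> 1 \<Longrightarrow> \<bar>a1 x\<bar> \<le> 3*M \<Longrightarrow> \<bar>a2 x\<bar> \<le> 3*M^2 \<Longrightarrow> \<bar>a3 x\<bar> \<le> M^3 \<Longrightarrow> a 0 x \<le> L*M"
    by (rule constant_term_le_root_scale) blast
  define h where "h = min h1 h2"
  define A where "A = max L C1"
  have "C1 \<le> A" "0 \<le> C1" using rho_pos B_nonneg by (simp_all add: A_def C1_def)
  show thesis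
  proof (rule that[of h A \<eta>])
    show "0 < h" "h \<le> h0" "0 \<le> A" "0 < \<eta>" using h1 h2 \<eta> \<open>C1 \<le> A\<close> \<open>0 \<le> C1\<close> by (auto simp: h_def)
    show "\<And>s x. \<bar>s\<bar> \<le> h \<Longrightarrow> \<bar>x\<bar> \<le> h \<Longrightarrow> e2 0 0 / 2 \<le> e2 s x" using h1 by (simp add: h_def)
    show "\<And>t x. 0 \<le> t \<Longrightarrow> t \<le> h \<Longrightarrow> \<bar>x\<bar> \<le> h \<Longrightarrow> Fa 1 0 / 2 * t \<le> a t x" using lin by (simp add: h_def)
    fix t x M assume t: "0 \<le> t" "t \<le> h" and x: "\<bar>x\<bar> \<le> h" and u: "a 0 x \<le> \<eta>"
      and M: "0 \<le> M" "M \<le> 1" "\<bar>a1 x\<bar> \<le> 3*M" "\<bar>a2 x\<bar> \<le> 3*M^2" "\<bar>a3 x\<bar> \<le> M^3"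
    have "a 0 x \<le> L*M" using const[OF _ _ u M] lin[of 0 x] x h2 by (simp add: h_def)
    moreover have "L*M \<le> A*M" "C1*t \<le> A*t" using M t \<open>C1 \<le> A\<close> by (simp_all add: A_def mult_right_mono)
    ultimately show "a t x \<le> A*(t + M)" using lin[of t x] t x by (simp add: h_def distrib_left)
  qed
qed

lemma coefficients_small_near_zero:
  assumes h: "0 < h" "h \<le> h0" and \<eta>: "0 < \<eta>"
  obtains \<delta> where "0 < \<delta>" "\<delta> \<le> h" and "\<And>x. \<bar>x\<bar> < \<delta> \<Longrightarrow>
    \<bar>a1 x\<bar> \<le> (h/4)/3 \<and> \<bar>a2 x\<bar> \<le> (h/4)^2/3 \<and> \<bar>a3 x\<bar> \<le> (h/4)^3/3 \<and> a 0 x \<le> \<eta>"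
proof -
  have "0 < (h/4)/3" using h by simp
  then obtain \<delta>1 where \<delta>1: "0 < \<delta>1" "\<And>x. \<bar>x\<bar> < \<delta>1 \<Longrightarrow> \<bar>a1 x\<bar> \<le> (h/4)/3"
    by (rule isCont_small_near_zero[OF coeffs_cont(1) coeffs_zero(1)]) blast
  have "0 < (h/4)^2/3" using h by simp
  then obtain \<delta>2 where \<delta>2: "0 < \<delta>2" "\<And>x. \<bar>x\<bar> < \<delta>2 \<Longrightarrow> \<bar>a2 x\<bar> \<le> (h/4)^2/3"
    by (rule isCont_small_near_zero[OF coeffs_cont(2) coeffs_zero(2)]) blast
  have "0 < (h/4)^3/3" using h by simp
  then obtain \<delta>3 where \<delta>3: "0 < \<delta>3" "\<And>x. \<bar>x\<bar> < \<delta>3 \<Longrightarrow> \<bar>a3 x\<bar> \<le> (h/4)^3/3"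
    by (rule isCont_small_near_zero[OF coeffs_cont(3) coeffs_zero(3)]) blast
  define \<delta> where "\<delta> = min h (min \<delta>1 (min \<delta>2 (min \<delta>3 (\<eta>/(B + 1)))))"
  have \<delta>: "0 < \<delta>" "\<delta> \<le> h" using h \<delta>1 \<delta>2 \<delta>3 \<eta> B_nonneg by (simp_all add: \<delta>_def)
  have a0: "a 0 x \<le> \<eta>" if "\<bar>x\<bar> < \<delta>" for x
  proof -
    have "a 0 x \<le> B * \<bar>x\<bar>" using a_zero_le[of x] that h by (simp add: \<delta>_def)
    also have "\<dots> \<le> (B + 1) * (\<eta>/(B + 1))" using that B_nonneg by (intro mult_mono) (auto simp: \<delta>_def)
    finally show ?thesis using B_nonneg by simp
  qed
  show ?thesis
  proof (rule that[OF \<delta>])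
    fix x assume x: "\<bar>x\<bar> < \<delta>"
    then have "\<bar>x\<bar> < \<delta>1" "\<bar>x\<bar> < \<delta>2" "\<bar>x\<bar> < \<delta>3" by (auto simp: \<delta>_def)
    then show "\<bar>a1 x\<bar> \<le> (h/4)/3 \<and> \<bar>a2 x\<bar> \<le> (h/4)^2/3 \<and> \<bar>a3 x\<bar> \<le> (h/4)^3/3 \<and> a 0 x \<le> \<eta>"
      using a0[OF x] \<delta>1(2) \<delta>2(2) \<delta>3(2) by blast
  qed
qed

lemma estimates:
  "\<exists>\<delta> > 0. \<exists>T0 > 0. \<exists>C > 0. \<forall>t x.
     (\<bar>x\<bar> < \<delta> \<and> 0 \<le> t \<and> t \<le> psi a1 a2 a3 x / 2 \<longrightarrow>
        t ^ 2 * a t x \<le> C * disc a b t x \<and>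
        \<bar>t\<bar> * \<bar>deriv (\<lambda>s. disc a b s x) t\<bar> \<le> C * disc a b t x \<and>
        \<bar>t\<bar> \<le> C * a t x) \<and>
     (\<bar>x\<bar> < \<delta> \<and> psi a1 a2 a3 x / 2 \<le> t \<and> t \<le> T0 \<longrightarrow>
        (t - psi a1 a2 a3 x) ^ 2 * a t x \<le> C * disc a b t x \<and>
        \<bar>t - psi a1 a2 a3 x\<bar> * \<bar>deriv (\<lambda>s. disc a b s x) t\<bar> \<le> C * disc a b t x \<and>
        \<bar>t - psi a1 a2 a3 x\<bar> \<le> C * a t x)"
proof -
  obtain h A \<eta> where h: "0 < h" "h \<le> h0" and A: "0 \<le> A" and \<eta>: "0 < \<eta>"
    and e2_lower: "\<And>s x. \<bar>s\<bar> \<le> h \<Longrightarrow> \<bar>x\<bar> \<le> h \<Longrightarrow> e2 0 0 / 2 \<le> e2 s x"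
    and a_lower: "\<And>t x. 0 \<le> t \<Longrightarrow> t \<le> h \<Longrightarrow> \<bar>x\<bar> \<le> h \<Longrightarrow> Fa 1 0 / 2 * t \<le> a t x"
    and a_upper: "\<And>t x M. 0 \<le> t \<Longrightarrow> t \<le> h \<Longrightarrow> \<bar>x\<bar> \<le> h \<Longrightarrow> a 0 x \<le> \<eta> \<Longrightarrow> 0 \<le> M \<Longrightarrow> M \<le> 1 \<Longrightarrow>
      \<bar>a1 x\<bar> \<le> 3*M \<Longrightarrow> \<bar>a2 x\<bar> \<le> 3*M^2 \<Longrightarrow> \<bar>a3 x\<bar> \<le> M^3 \<Longrightarrow> a t x \<le> A*(t + M)"
    by (rule near_origin_bounds) blast
  obtain \<delta> where \<delta>: "0 < \<delta>" "\<delta> \<le> h" and small: "\<And>x. \<bar>x\<bar> < \<delta> \<Longrightarrow>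
      \<bar>a1 x\<bar> \<le> (h/4)/3 \<and> \<bar>a2 x\<bar> \<le> (h/4)^2/3 \<and> \<bar>a3 x\<bar> \<le> (h/4)^3/3 \<and> a 0 x \<le> \<eta>"
    using coefficients_small_near_zero[OF h \<eta>] by blast
  define C where "C = 3*A/(e2 0 0 / 2) + h*(2*B/\<rho>)/(e2 0 0 / 2) + 3 + 1/(Fa 1 0 / 2)"
  have E0: "0 < e2 0 0 / 2" using e2_pos[of 0 0] h0 by simp
  have k: "0 < Fa 1 0 / 2" using slope_pos by simp
  have C_pos: "0 < C" using E0 k A h rho_pos B_nonneg unfolding C_def by (smt (verit) divide_nonneg_pos mult_nonneg_nonneg)
  have main: "\<phi>^2 * a t x \<le> C * disc a b t x \<and> \<bar>\<phi>\<bar> * \<bar>deriv (\<lambda>s. disc a b s x) t\<bar> \<le> C * disc a b t x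
      \<and> \<bar>\<phi>\<bar> \<le> C * a t x"
    if x: "\<bar>x\<bar> < \<delta>" and t: "0 \<le> t" and region: "(t \<le> psi a1 a2 a3 x / 2 \<and> \<phi> = t) \<or>
      (psi a1 a2 a3 x / 2 \<le> t \<and> t \<le> h/2 \<and> \<phi> = t - psi a1 a2 a3 x)" for t x \<phi>
  proof -
    have xh: "\<bar>x\<bar> \<le> h" using x \<delta> by simp
    have sm: "\<bar>a1 x\<bar> \<le> (h/4)/3" "\<bar>a2 x\<bar> \<le> (h/4)^2/3" "\<bar>a3 x\<bar> \<le> (h/4)^3/3" "a 0 x \<le> \<eta>"
      using small[OF x] by auto
    show ?thesis
      using estimates_at[OF h xh E0 e2_lower[OF _ xh] k a_lower[OF _ _ xh] A a_upper[OF _ _ xh sm(4)]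
          sm(1-3) order_refl t region]
      unfolding C_def by blast
  qed
  show ?thesis
  proof (intro exI conjI allI)
    show "0 < \<delta>" "0 < h/2" "0 < C" using \<delta>(1) h C_pos by simp_all
    fix t x
    show "\<bar>x\<bar> < \<delta> \<and> 0 \<le> t \<and> t \<le> psi a1 a2 a3 x / 2 \<longrightarrow>
        t ^ 2 * a t x \<le> C * disc a b t x \<and>
        \<bar>t\<bar> * \<bar>deriv (\<lambda>s. disc a b s x) t\<bar> \<le> C * disc a b t x \<and> \<bar>t\<bar> \<le> C * a t x"
      using main[of x t t] by simp
    have "0 \<le> psi a1 a2 a3 x" by (simp add: psi_def)
    then show "\<bar>x\<bar> < \<delta> \<and> psi a1 a2 a3 x / 2 \<le> t \<and> t \<le> h/2 \<longrightarrow>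
        (t - psi a1 a2 a3 x) ^ 2 * a t x \<le> C * disc a b t x \<and>
        \<bar>t - psi a1 a2 a3 x\<bar> * \<bar>deriv (\<lambda>s. disc a b s x) t\<bar> \<le> C * disc a b t x \<and>
        \<bar>t - psi a1 a2 a3 x\<bar> \<le> C * a t x"
      using main[of x t "t - psi a1 a2 a3 x"] by simp
  qed
qed

end

theorem proposition5p1:
  fixes a b e2 :: "real \<Rightarrow> real \<Rightarrow> real"
    and a1 a2 a3 :: "real \<Rightarrow> real"
    and W V :: "(real \<times> real) set" and U N :: "real set" and T :: real
  assumes W: "open W" "(0, 0) \<in> W"
    and a_an: "real_analytic2_on a W" and b_an: "real_analytic2_on b W"
    and T: "T > 0" and U: "open U" "0 \<in> U"
    and hyp: "\<And>t x. 0 \<le> t \<Longrightarrow> t < T \<Longrightarrow> x \<in> U \<Longrightarrow> disc a b t x \<ge> 0"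
    and a00: "a 0 0 = 0"
    and dta: "\<exists>d. ((\<lambda>t. a t 0) has_real_derivative d) (at 0) \<and> d \<noteq> 0"
    and V: "open V" "(0, 0) \<in> V"
    and e2_an: "real_analytic2_on e2 V"
    and e2_pos: "\<And>t x. (t, x) \<in> V \<Longrightarrow> e2 t x > 0"
    and N: "open N" "0 \<in> N"
    and aj_an: "real_analytic1_on a1 N" "real_analytic1_on a2 N" "real_analytic1_on a3 N"
    and aj0: "a1 0 = 0" "a2 0 = 0" "a3 0 = 0"
    and weier: "\<And>t x. (t, x) \<in> V \<Longrightarrow>
        disc a b t x = e2 t x * (t ^ 3 + a1 x * t ^ 2 + a2 x * t + a3 x)"
  shows "\<exists>\<delta> > 0. \<exists>T0 > 0. \<exists>C > 0. \<forall>t x.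
     (\<bar>x\<bar> < \<delta> \<and> 0 \<le> t \<and> t \<le> psi a1 a2 a3 x / 2 \<longrightarrow>
        t ^ 2 * a t x \<le> C * disc a b t x \<and>
        \<bar>t\<bar> * \<bar>deriv (\<lambda>s. disc a b s x) t\<bar> \<le> C * disc a b t x \<and>
        \<bar>t\<bar> \<le> C * a t x) \<and>
     (\<bar>x\<bar> < \<delta> \<and> psi a1 a2 a3 x / 2 \<le> t \<and> t \<le> T0 \<longrightarrow>
        (t - psi a1 a2 a3 x) ^ 2 * a t x \<le> C * disc a b t x \<and>
        \<bar>t - psi a1 a2 a3 x\<bar> * \<bar>deriv (\<lambda>s. disc a b s x) t\<bar> \<le> C * disc a b t x \<and>
        \<bar>t - psi a1 a2 a3 x\<bar> \<le> C * a t x)"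
proof -
  obtain \<rho> B Fa Fb Fe where exp: "geometric_expansion a \<rho> B Fa" "geometric_expansion b \<rho> B Fb"
      "geometric_expansion e2 \<rho> B Fe"
    using real_analytic2_on_common_expansion[OF a_an W(2) b_an W(2) e2_an V(2)] by blast
  obtain eV where eV: "0 < eV" "\<And>s x. \<bar>s\<bar> < eV \<Longrightarrow> \<bar>x\<bar> < eV \<Longrightarrow> (s, x) \<in> V"
    using open_contains_square[OF V] by blast
  obtain eU where eU: "0 < eU" "\<And>x. \<bar>x\<bar> < eU \<Longrightarrow> x \<in> U" using open_contains_interval[OF U] by blast
  define h0 where "h0 = min (\<rho>/4) (min (eV/2) (min (eU/2) (min (T/2) 1)))"
  have "0 < \<rho>" using exp(1) by (simp add: geometric_expansion_def)
  then have h0: "0 < h0" "h0 \<le> 1" "h0 \<le> \<rho>/4" "h0 < eV" "h0 < eU" "h0 < T"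
    using eV(1) eU(1) T by (auto simp: h0_def)
  interpret discriminant_expansion a b e2 a1 a2 a3 \<rho> B h0 Fa Fb Fe
  proof
    show "disc a b t x = e2 t x * cubic (a1 x) (a2 x) (a3 x) t" "0 < e2 t x"
      if "\<bar>t\<bar> \<le> h0" "\<bar>x\<bar> \<le> h0" for t x
      using weier[of t x] e2_pos[of t x] eV(2)[of t x] that h0 by (simp_all add: cubic_real)
  qed (use exp h0 hyp eU(2) aj0 a00 dta real_analytic1_on_isCont[OF _ N(2)] aj_an in auto)
  show ?thesis by (rule estimates)
qed

end
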